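(* Suppose $0<a_1\le a_2<1$, that condition $[A_1]$ holds, and that $f=F'$ and $g=G'$ satisfy a Hölder condition of order $\alpha\ge1/2$ on $F^{-1}(U)$. Define $R_n(p_n)$ by $$\int_{\xi_{p_n n:n}}^{\xi_{p_n}}\big(G(x)-G(\xi_{p_n})\big)\,dF_n(x)=-\frac12[F_n(\xi_{p_n})-F(\xi_{p_n})]^2\frac gf(\xi_{p_n})+R_n(p_n).$$ Then for each $c>0$ there is a constant $A>0$, not depending on $n$, such that $$\mathbf P\big(|R_n(p_n)|>A(\log n/n)^{5/4}\big)=O(n^{-c}).$$
   Context: Let $X_1,X_2,\dots$ be i.i.d. real random variables with distribution function $F$, and let $F^{-1}(u)=\inf\{x:F(x)\ge u\}$. Let $X_{1:n}\le\dots\le X_{n:n}$ be the order statistics, $F_n$ the empirical distribution function and $F_n^{-1}$ its left-continuous inverse. Let $k_n$ be integers with $0\le k_n\le n$, and put $p_n=k_n/n$, $\xi_{p_n}=F^{-1}(p_n)$, $\xi_{p_n n:n}=F_n^{-1}(p_n)=X_{k_n:n}$, $a_1=\liminf p_n$ and $a_2=\limsup p_n$. The integral means $$\frac{\operatorname{sgn}(N_n-k_n)}{n}\sum_{i=(k_n\wedge N_n)+1}^{k_n\vee N_n}\big(G(X_{i:n})-G(\xi_{p_n})\big),$$ where $N_n=\#\{i\le n:X_i\le\xi_{p_n}\}$ and $\operatorname{sgn}(0)=0$. Condition $[A_1]$ (here $0<a_1\le a_2<1$): there is an open $U\subset(0,1)$ containing $[a_1,a_2]$ on which $F^{-1}$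 is differentiable, i.e. $f=F'$ exists and is positive on $F^{-1}(U)$. $G$ is differentiable on $F^{-1}(U)$ with $g=G'$, and $(g/f)(x)=g(x)/f(x)$. A Hölder condition of order $\alpha$ on $S$ means $|h(x)-h(y)|\le L|x-y|^\alpha$ for all $x,y\in S$. *)

theory Defs
  imports "HOL-Probability.Probability"
begin

definition quantile :: "(real \<Rightarrow> real) \<Rightarrow> real \<Rightarrow> real" where
  "quantile F u = Inf {x. u \<le> F x}"

definition ecdf :: "(nat \<Rightarrow> 'a \<Rightarrow> real) \<Rightarrow> nat \<Rightarrow> 'a \<Rightarrow> real \<Rightarrow> real" where
  "ecdf X n w x = real (card {i\<in>{1..n}. X i w \<le> x}) / real n"

text \<open>Order statistic X_{i:n} (1-based: i = 1 is the minimum).\<close>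
definition order_stat :: "(nat \<Rightarrow> 'a \<Rightarrow> real) \<Rightarrow> nat \<Rightarrow> 'a \<Rightarrow> nat \<Rightarrow> real" where
  "order_stat X n w i = sort (map (\<lambda>j. X j w) [1..<n+1]) ! (i - 1)"

definition count_le :: "(nat \<Rightarrow> 'a \<Rightarrow> real) \<Rightarrow> nat \<Rightarrow> 'a \<Rightarrow> real \<Rightarrow> nat" where
  "count_le X n w xi = card {i\<in>{1..n}. X i w \<le> xi}"

text \<open>The integral  \<integral>_{X_{k:n}}^{xi} (G(x) - G(xi)) dF_n(x), given by the paper as
  sgn(N_n - k)/n * \<Sum>_{i=(k \<and> N_n)+1}^{k \<or> N_n} (G(X_{i:n}) - G(xi)).\<close>
definition int_mean ::
  "(real \<Rightarrow> real) \<Rightarrow> (nat \<Rightarrow> 'a \<Rightarrow> real) \<Rightarrow> nat \<Rightarrow> nat \<Rightarrow> real \<Rightarrow> 'a \<Rightarrow> real" where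
  "int_mean G X n k xi w =
     (let N = count_le X n w xi in
      sgn (real N - real k) / real n *
        (\<Sum>i\<in>{min k N + 1 .. max k N}. G (order_stat X n w i) - G xi))"

definition holder_on :: "real set \<Rightarrow> real \<Rightarrow> (real \<Rightarrow> real) \<Rightarrow> bool" where
  "holder_on S \<alpha> h \<longleftrightarrow> (\<exists>L. \<forall>x\<in>S. \<forall>y\<in>S. \<bar>h x - h y\<bar> \<le> L * \<bar>x - y\<bar> powr \<alpha>)"

end

theory Submission
  imports Defs "HOL-Real_Asymp.Real_Asymp"
begin

text \<open>
  Write \<open>p = k/n\<close>, \<open>N = n F\<^sub>n(\<xi>)\<close> and \<open>D = N - k\<close>. The integral mean is \<open>sgn D / n\<close> times the
  sum of \<open>G (X\<^sub>i\<^sub>:\<^sub>n) - G \<xi>\<close> over the \<open>|D|\<close> order statistics between \<open>X\<^sub>k\<^sub>:\<^sub>n\<close> and \<open>\<xi>\<close>.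
  Because \<open>f\<close> and \<open>g\<close> are Hoelder of order \<open>1/2\<close> and \<open>f\<close> is bounded below near \<open>\<xi>\<close>,
  \<open>G y - G \<xi> = (g/f)(\<xi>) (F y - p) + O(|F y - p|\<^sup>3\<^sup>/\<^sup>2)\<close>; and wherever the sample counts of a
  grid of cells of probability \<open>1/n\<close> around \<open>\<xi>\<close> are accurate to \<open>E\<close>, we have
  \<open>F (X\<^sub>i\<^sub>:\<^sub>n) = p + (i - N)/n + O(E/n)\<close>. The sum then becomes \<open>(g/f)(\<xi>) (-D\<^sup>2/2 + D/2) / n\<^sup>2\<close>,
  i.e. \<open>-1/2 [F\<^sub>n(\<xi>) - F(\<xi>)]\<^sup>2 (g/f)(\<xi>)\<close> up to small terms.

  Chernoff bounds for binomial counts give \<open>|D| = O(\<surd>(n log n))\<close> and cell counts accurate to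
  \<open>E = O(n (log n / n)\<^sup>3\<^sup>/\<^sup>4)\<close> simultaneously, outside an event of probability \<open>O(n\<^sup>-\<^sup>c)\<close>; all
  error terms are then \<open>O((log n / n)\<^sup>5\<^sup>/\<^sup>4)\<close>.
\<close>

section \<open>Chernoff bounds for sample counts\<close>

lemma exp_le_quadratic:
  fixes l :: real assumes "\<bar>l\<bar> \<le> 1" shows "exp l \<le> 1 + l + l\<^sup>2"
proof (cases "l \<ge> 0")
  case True thus ?thesis using exp_bound[of l] assms by auto
next
  case False
  define t where "t = -l"
  have t: "0 \<le> t" "t \<le> 1" using False assms by (auto simp: t_def)
  have e: "1 + t + t\<^sup>2/2 \<le> exp t" using exp_lower_Taylor_quadratic t by auto
  have "1 - t + t\<^sup>2 = (t - 1/2)\<^sup>2 + 3/4" by (simp add: power2_eq_square algebra_simps)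
  hence pos: "0 < 1 - t + t\<^sup>2" by (metis add_nonneg_pos zero_le_power2 zero_less_divide_iff zero_less_numeral)
  have "(1 - t + t\<^sup>2) * (1 + t + t\<^sup>2/2) = 1 + t\<^sup>2/2 + t^3/2 + t^4/2"
    by (simp add: field_simps power2_eq_square power3_eq_cube power4_eq_xxxx)
  moreover have "0 \<le> t\<^sup>2/2 + t^3/2 + t^4/2" using t by simp
  ultimately have "1 \<le> (1 - t + t\<^sup>2) * (1 + t + t\<^sup>2/2)" by linarith
  also have "\<dots> \<le> (1 - t + t\<^sup>2) * exp t" using e pos by (intro mult_left_mono) auto
  finally have "exp (-t) \<le> 1 - t + t\<^sup>2" by (simp add: exp_minus field_simps)
  thus ?thesis by (simp add: t_def)
qed

lemma (in prob_space) bernoulli_mgf_le: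
  assumes Z: "random_variable borel Z" and S: "S \<in> sets borel"
    and q: "prob {w\<in>space M. Z w \<in> S} = q" and l: "\<bar>l\<bar> \<le> 1"
  shows "(\<integral>\<^sup>+w. ennreal (exp (l * (indicator S (Z w) - q))) \<partial>M) \<le> ennreal (exp (q * l\<^sup>2))"
proof -
  define A where "A = {w\<in>space M. Z w \<in> S}"
  have A: "A \<in> sets M" unfolding A_def using Z S by measurable
  have "(\<integral>\<^sup>+w. ennreal (exp (l * (indicator S (Z w) - q))) \<partial>M) =
        (\<integral>\<^sup>+w. ennreal (exp (l*(1-q))) * indicator A w + ennreal (exp (-l*q)) * indicator (space M - A) w \<partial>M)"
    by (intro nn_integral_cong) (auto simp: A_def indicator_def)
  also have "\<dots> = ennreal (exp (l*(1-q))) * emeasure M A + ennreal (exp (-l*q)) * emeasure M (space M - A)"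
    using A by (subst nn_integral_add) (auto simp: nn_integral_cmult_indicator)
  also have "\<dots> = ennreal (exp (l*(1-q)) * q + exp (-l*q) * (1 - q))"
  proof -
    have q01: "0 \<le> q" "q \<le> 1" using q by auto
    have "emeasure M A = ennreal q" "emeasure M (space M - A) = ennreal (1 - q)"
      using A q by (auto simp: emeasure_eq_measure prob_compl A_def)
    moreover have "ennreal (exp (l*(1-q))) * ennreal q = ennreal (exp (l*(1-q)) * q)"
      "ennreal (exp (-l*q)) * ennreal (1-q) = ennreal (exp (-l*q) * (1-q))"
      using q01 by (auto simp: ennreal_mult)
    moreover have "ennreal (exp (l*(1-q)) * q) + ennreal (exp (-l*q) * (1-q)) = ennreal (exp (l*(1-q)) * q + exp (-l*q) * (1 - q))"
      using q01 by (subst ennreal_plus) auto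
    ultimately show ?thesis by simp
  qed
  also have "\<dots> \<le> ennreal (exp (q * l\<^sup>2))"
  proof (intro ennreal_leI)
    have q01: "0 \<le> q" "q \<le> 1" using q by auto
    have "exp (l*(1-q)) * q + exp (-l*q) * (1 - q) = exp (-l*q) * (1 + q * (exp l - 1))"
      by (simp add: algebra_simps exp_diff[symmetric] exp_add[symmetric] mult_exp_exp)
    also have "\<dots> \<le> exp (-l*q) * (1 + q*(l + l\<^sup>2))"
      using exp_le_quadratic[OF l] q01 by (intro mult_left_mono) (auto intro!: mult_left_mono)
    also have "\<dots> \<le> exp (-l*q) * exp (q*(l + l\<^sup>2))"
      by (intro mult_left_mono) (auto simp: exp_ge_add_one_self)
    also have "\<dots> = exp (q * l\<^sup>2)" by (simp add: mult_exp_exp algebra_simps)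
    finally show "exp (l*(1-q)) * q + exp (-l*q) * (1 - q) \<le> exp (q * l\<^sup>2)" .
  qed
  finally show ?thesis .
qed

lemma card_filter_eq_sum_indicator:
  assumes "finite I"
  shows "real (card {i\<in>I. X i w \<in> S}) = (\<Sum>i\<in>I. indicator S (X i w))"
proof -
  have "(\<Sum>i\<in>I. indicator S (X i w) :: real) = (\<Sum>i\<in>{i\<in>I. X i w \<in> S}. 1)"
    using sum.inter_filter[OF assms, of "\<lambda>_. 1::real" "\<lambda>i. X i w \<in> S"] by (simp add: indicator_def of_bool_def)
  thus ?thesis by simp
qed

lemma (in prob_space) count_mgf_le:
  assumes fin: "finite I" and indep: "indep_vars (\<lambda>_. borel) X I" and S: "S \<in> sets borel"
    and q: "\<And>i. i\<in>I \<Longrightarrow> prob {w\<in>space M. X i w \<in> S} = q"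
    and Q: "real (card I) * q \<le> Q" and l: "\<bar>l\<bar> \<le> 1"
  shows "(\<integral>\<^sup>+w. ennreal (exp (l * (\<Sum>i\<in>I. indicator S (X i w) - q))) * indicator (space M) w \<partial>M)
          \<le> ennreal (exp (Q * l\<^sup>2))"
proof -
  have rv: "\<And>i. i \<in> I \<Longrightarrow> random_variable borel (X i)" using indep by (auto simp: indep_vars_def)
  have "(\<integral>\<^sup>+w. ennreal (exp (l * (\<Sum>i\<in>I. indicator S (X i w) - q))) * indicator (space M) w \<partial>M)
      = (\<integral>\<^sup>+w. (\<Prod>i\<in>I. ennreal (exp (l * (indicator S (X i w) - q)))) \<partial>M)"
    by (intro nn_integral_cong) (simp add: sum_distrib_left exp_sum fin prod_ennreal)
  also have "\<dots> = (\<Prod>i\<in>I. \<integral>\<^sup>+w. ennreal (exp (l * (indicator S (X i w) - q))) \<partial>M)"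
    using S by (intro indep_vars_nn_integral fin indep_vars_compose2[OF indep]) auto
  also have "\<dots> \<le> (\<Prod>i\<in>I. ennreal (exp (q * l\<^sup>2)))"
    by (intro prod_mono_ennreal bernoulli_mgf_le rv S q l)
  also have "\<dots> = ennreal (exp (real (card I) * q * l\<^sup>2))"
    by (simp add: ennreal_power exp_of_nat_mult[symmetric] mult.assoc)
  also have "\<dots> \<le> ennreal (exp (Q * l\<^sup>2))"
    using Q by (intro ennreal_leI) (auto intro!: mult_right_mono)
  finally show ?thesis .
qed

lemma (in prob_space) count_one_sided_tail:
  assumes fin: "finite I" and indep: "indep_vars (\<lambda>_. borel) X I" and S: "S \<in> sets borel"
    and q: "\<And>i. i\<in>I \<Longrightarrow> prob {w\<in>space M. X i w \<in> S} = q"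
    and Q: "real (card I) * q \<le> Q" and s: "0 < s" "s \<le> 2*Q" and \<sigma>: "\<bar>\<sigma>\<bar> = 1"
  shows "prob {w\<in>space M. s \<le> \<sigma> * (\<Sum>i\<in>I. indicator S (X i w) - q)} \<le> exp (-(s\<^sup>2)/(4*Q))"
proof -
  have rv: "\<And>i. i \<in> I \<Longrightarrow> random_variable borel (X i)" using indep by (auto simp: indep_vars_def)
  have [measurable]: "(\<lambda>w. \<sigma> * (\<Sum>i\<in>I. indicator S (X i w) - q)) \<in> borel_measurable M"
    using S by (intro borel_measurable_times borel_measurable_sum borel_measurable_diff
        measurable_compose[OF rv borel_measurable_indicator]) auto
  define l where "l = s / (2*Q)"
  have l: "0 < l" "\<bar>\<sigma> * l\<bar> \<le> 1" using s \<sigma> by (auto simp: l_def field_simps abs_mult)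
  have "emeasure M {w\<in>space M. s \<le> \<sigma> * (\<Sum>i\<in>I. indicator S (X i w) - q)}
      \<le> ennreal (exp (- l * s)) *
        (\<integral>\<^sup>+w. ennreal (exp (l * (\<sigma> * (\<Sum>i\<in>I. indicator S (X i w) - q)))) * indicator (space M) w \<partial>M)"
    by (intro Chernoff_ineq_nn_integral_ge l) auto
  also have "\<dots> \<le> ennreal (exp (- l * s)) * ennreal (exp (Q * (\<sigma> * l)\<^sup>2))"
    using count_mgf_le[OF fin indep S q Q l(2)] by (intro mult_left_mono) (simp_all add: ac_simps)
  also have "\<dots> = ennreal (exp (-(s\<^sup>2)/(4*Q)))"
  proof -
    have "- l * s + Q * (\<sigma> * l)\<^sup>2 = -(s\<^sup>2)/(4*Q)"
      using s \<sigma> by (simp add: l_def field_simps power2_eq_square abs_mult_self_eq[of \<sigma>, symmetric])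
    thus ?thesis by (simp add: ennreal_mult[symmetric] mult_exp_exp)
  qed
  finally show ?thesis by (simp add: emeasure_eq_measure)
qed

lemma (in prob_space) count_deviation_tail:
  assumes fin: "finite I" and indep: "indep_vars (\<lambda>_. borel) X I" and S: "S \<in> sets borel"
    and q: "\<And>i. i\<in>I \<Longrightarrow> prob {w\<in>space M. X i w \<in> S} = q"
    and Q: "real (card I) * q \<le> Q" and s: "0 < s" "s \<le> 2*Q"
  shows "{w\<in>space M. s \<le> \<bar>real (card {i\<in>I. X i w \<in> S}) - real (card I) * q\<bar>} \<in> events"
    and "prob {w\<in>space M. s \<le> \<bar>real (card {i\<in>I. X i w \<in> S}) - real (card I) * q\<bar>} \<le> 2 * exp (-(s\<^sup>2)/(4*Q))"
proof -
  have rv: "\<And>i. i \<in> I \<Longrightarrow> random_variable borel (X i)" using indep by (auto simp: indep_vars_def)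
  define D where "D w = (\<Sum>i\<in>I. indicator S (X i w) - q)" for w
  have [measurable]: "D \<in> borel_measurable M"
    unfolding D_def using S by (intro borel_measurable_sum borel_measurable_diff
        measurable_compose[OF rv borel_measurable_indicator]) auto
  have eq: "{w\<in>space M. s \<le> \<bar>real (card {i\<in>I. X i w \<in> S}) - real (card I) * q\<bar>}
     = {w\<in>space M. s \<le> D w} \<union> {w\<in>space M. s \<le> - D w}"
    using fin by (auto simp: D_def card_filter_eq_sum_indicator sum_subtractf abs_le_iff)
  have "prob {w\<in>space M. s \<le> D w} \<le> exp (-(s\<^sup>2)/(4*Q))"
    using count_one_sided_tail[OF fin indep S q Q s, of 1] by (simp add: D_def)
  moreover have "prob {w\<in>space M. s \<le> - D w} \<le> exp (-(s\<^sup>2)/(4*Q))"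
    using count_one_sided_tail[OF fin indep S q Q s, of "-1"] by (simp add: D_def)
  moreover have "prob ({w\<in>space M. s \<le> D w} \<union> {w\<in>space M. s \<le> - D w})
      \<le> prob {w\<in>space M. s \<le> D w} + prob {w\<in>space M. s \<le> - D w}"
    by (intro measure_Un_le) measurable
  ultimately show "prob {w\<in>space M. s \<le> \<bar>real (card {i\<in>I. X i w \<in> S}) - real (card I) * q\<bar>}
      \<le> 2 * exp (-(s\<^sup>2)/(4*Q))"
    unfolding eq by linarith
  show "{w\<in>space M. s \<le> \<bar>real (card {i\<in>I. X i w \<in> S}) - real (card I) * q\<bar>} \<in> events"
    unfolding eq by measurable
qed

lemma (in prob_space) count_deviations_uniform:
  fixes X :: "nat \<Rightarrow> 'a \<Rightarrow> real" and S :: "'b \<Rightarrow> real set"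
  assumes fin: "finite I" "finite Ms" and indep: "indep_vars (\<lambda>_. borel) X I"
    and S: "\<And>m. m \<in> Ms \<Longrightarrow> S m \<in> sets borel"
    and q: "\<And>m i. m \<in> Ms \<Longrightarrow> i \<in> I \<Longrightarrow> prob {w\<in>space M. X i w \<in> S m} = q m"
    and Q: "\<And>m. m \<in> Ms \<Longrightarrow> real (card I) * q m \<le> Q" and s: "0 < s" "s \<le> 2 * Q"
  obtains B where "B \<in> events" "prob B \<le> 2 * real (card Ms) * exp (-(s\<^sup>2) / (4 * Q))"
    and "\<And>w m. w \<in> space M \<Longrightarrow> w \<notin> B \<Longrightarrow> m \<in> Ms \<Longrightarrow>
           \<bar>real (card {i\<in>I. X i w \<in> S m}) - real (card I) * q m\<bar> < s"
proof -
  define Bm where "Bm m = {w\<in>space M. s \<le> \<bar>real (card {i\<in>I. X i w \<in> S m}) - real (card I) * q m\<bar>}" for m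
  have tail: "Bm m \<in> events" "prob (Bm m) \<le> 2 * exp (-(s\<^sup>2) / (4 * Q))" if "m \<in> Ms" for m
  proof -
    note tail_m = count_deviation_tail[OF fin(1) indep S[OF that] q[OF that] Q[OF that] s]
    show "Bm m \<in> events" unfolding Bm_def by (rule tail_m(1))
    show "prob (Bm m) \<le> 2 * exp (-(s\<^sup>2) / (4 * Q))" unfolding Bm_def by (rule tail_m(2))
  qed
  have "prob (\<Union>m\<in>Ms. Bm m) \<le> (\<Sum>m\<in>Ms. prob (Bm m))"
    using tail fin by (intro finite_measure_subadditive_finite) auto
  also have "\<dots> \<le> (\<Sum>m\<in>Ms. 2 * exp (-(s\<^sup>2) / (4 * Q)))" by (intro sum_mono tail)
  finally have "prob (\<Union>m\<in>Ms. Bm m) \<le> 2 * real (card Ms) * exp (-(s\<^sup>2) / (4 * Q))" by simp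
  moreover have "(\<Union>m\<in>Ms. Bm m) \<in> events" using tail fin by (intro sets.finite_UN) auto
  ultimately show thesis using that[of "\<Union>m\<in>Ms. Bm m"] by (auto simp: Bm_def not_le)
qed

lemma (in prob_space) prob_Ioc_eq:
  fixes Z :: "'a \<Rightarrow> real"
  assumes rv: "random_variable borel Z" and F: "\<And>x. prob {w\<in>space M. Z w \<le> x} = F x" and ab: "a \<le> b"
  shows "prob {w\<in>space M. Z w \<in> {a<..b}} = F b - F a"
proof -
  have "{w\<in>space M. Z w \<in> {a<..b}} = {w\<in>space M. Z w \<le> b} - {w\<in>space M. Z w \<le> a}"
    using ab by auto
  moreover have "{w\<in>space M. Z w \<le> b} \<in> events" "{w\<in>space M. Z w \<le> a} \<in> events"
    using rv by measurable
  moreover have "{w\<in>space M. Z w \<le> a} \<subseteq> {w\<in>space M. Z w \<le> b}" using ab by auto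
  ultimately show ?thesis using F by (simp add: finite_measure_Diff)
qed

section \<open>Order statistics and the integral mean\<close>

lemma sorted_nth_le_iff:
  fixes s :: "real list"
  assumes "sorted s" "m < length s"
  shows "(s ! m \<le> x) = (m < length (filter (\<lambda>y. y \<le> x) s))"
  using assms
proof (induction s arbitrary: m)
  case Nil thus ?case by simp
next
  case (Cons a t)
  show ?case
  proof (cases "a \<le> x")
    case True
    thus ?thesis using Cons by (cases m) auto
  next
    case False
    have "\<forall>y\<in>set (a#t). \<not> y \<le> x" using Cons.prems(1) False by auto
    hence "filter (\<lambda>y. y \<le> x) (a#t) = []" by (simp add: filter_empty_conv)
    moreover have "\<not> (a#t) ! m \<le> x" using \<open>\<forall>y\<in>set (a#t). \<not> y \<le> x\<close> Cons.prems(2) nth_mem by blast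
    ultimately show ?thesis by simp
  qed
qed

lemma count_le_eq_length_filter:
  "count_le X n w x = length (filter (\<lambda>y. y \<le> x) (sort (map (\<lambda>j. X j w) [1..<n+1])))"
proof -
  have "length (filter (\<lambda>y. y \<le> x) (sort (map (\<lambda>j. X j w) [1..<n+1])))
      = length (filter (\<lambda>y. y \<le> x) (map (\<lambda>j. X j w) [1..<n+1]))"
    by (metis filter_sort length_sort)
  also have "\<dots> = length (filter (\<lambda>j. X j w \<le> x) [1..<n+1])"
    by (simp only: filter_map length_map comp_def)
  also have "\<dots> = card (set (filter (\<lambda>j. X j w \<le> x) [1..<n+1]))"
    by (rule distinct_card[symmetric]) (simp del: upt_Suc)
  also have "set (filter (\<lambda>j. X j w \<le> x) [1..<n+1]) = {i\<in>{1..n}. X i w \<le> x}"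
    by auto
  finally show ?thesis by (simp add: count_le_def)
qed

lemma order_stat_le_iff:
  assumes "1 \<le> i" "i \<le> n"
  shows "(order_stat X n w i \<le> x) = (i \<le> count_le X n w x)"
proof -
  let ?s = "sort (map (\<lambda>j. X j w) [1..<n+1])"
  have "(order_stat X n w i \<le> x) = (i - 1 < length (filter (\<lambda>y. y \<le> x) ?s))"
    unfolding order_stat_def using assms by (intro sorted_nth_le_iff) auto
  moreover have "\<And>L. (i - 1 < L) = (i \<le> L)" using assms by auto
  ultimately show ?thesis unfolding count_le_eq_length_filter by simp
qed

lemma count_le_le: "count_le X n w x \<le> n"
proof -
  have "count_le X n w x \<le> card {1..n}" unfolding count_le_def by (intro card_mono) auto
  thus ?thesis by simp
qed

lemma count_le_eq_add_card_Ioc: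
  assumes "y \<le> x"
  shows "count_le X n w x = count_le X n w y + card {i\<in>{1..n}. X i w \<in> {y<..x}}"
proof -
  have "{i\<in>{1..n}. X i w \<le> x} = {i\<in>{1..n}. X i w \<le> y} \<union> {i\<in>{1..n}. X i w \<in> {y<..x}}"
    using assms by auto
  moreover have "{i\<in>{1..n}. X i w \<le> y} \<inter> {i\<in>{1..n}. X i w \<in> {y<..x}} = {}" by auto
  ultimately show ?thesis unfolding count_le_def by (simp add: card_Un_disjoint)
qed

lemma ecdf_eq_count_le: "ecdf X n w x = real (count_le X n w x) / real n"
  unfolding ecdf_def count_le_def ..

lemma count_le_grid_close:
  fixes X :: "nat \<Rightarrow> 'a \<Rightarrow> real" and xg :: "int \<Rightarrow> real"
  assumes xg0: "xg 0 = xi" and E: "E \<ge> 0"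
    and xg_mono: "\<And>j. \<bar>real_of_int j\<bar> \<le> real J \<Longrightarrow> (0 \<le> j \<longrightarrow> xi \<le> xg j) \<and> (j \<le> 0 \<longrightarrow> xg j \<le> xi)"
    and up: "\<And>m. m \<in> {1..J} \<Longrightarrow> \<bar>real (card {i\<in>{1..n}. X i w \<in> {xi<..xg (int m)}}) - real m\<bar> < E"
    and down: "\<And>m. m \<in> {1..J} \<Longrightarrow> \<bar>real (card {i\<in>{1..n}. X i w \<in> {xg (- int m)<..xi}}) - real m\<bar> < E"
    and j: "\<bar>real_of_int j\<bar> \<le> real J"
  shows "\<bar>real (count_le X n w (xg j)) - real (count_le X n w xi) - real_of_int j\<bar> \<le> E"
proof (cases j "0::int" rule: linorder_cases)
  case less
  define m where "m = nat (- j)"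
  have jm: "j = - int m" and m: "m \<in> {1..J}" using less j by (auto simp: m_def)
  have "count_le X n w xi = count_le X n w (xg j) + card {i\<in>{1..n}. X i w \<in> {xg j<..xi}}"
    using xg_mono[OF j] less by (intro count_le_eq_add_card_Ioc) auto
  thus ?thesis using down[OF m] unfolding jm by simp
next
  case equal thus ?thesis using E xg0 by simp
next
  case greater
  define m where "m = nat j"
  have jm: "j = int m" and m: "m \<in> {1..J}" using greater j by (auto simp: m_def)
  have "count_le X n w (xg j) = count_le X n w xi + card {i\<in>{1..n}. X i w \<in> {xi<..xg j}}"
    using xg_mono[OF j] greater by (intro count_le_eq_add_card_Ioc) auto
  thus ?thesis using up[OF m] unfolding jm by simp
qed

lemma sum_offsets_from_base:
  "(\<Sum>i\<in>{a+1..a+d}. real i - real a) = real d * (real d + 1) / 2"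
proof (induction d)
  case 0 thus ?case by simp
next
  case (Suc d)
  have "{a+1..a + Suc d} = insert (a + Suc d) {a+1..a+d}" by auto
  hence "(\<Sum>i\<in>{a+1..a+Suc d}. real i - real a) = (real (a + Suc d) - real a) + (\<Sum>i\<in>{a+1..a+d}. real i - real a)"
    by simp
  also have "\<dots> = real (Suc d) * (real (Suc d) + 1) / 2" using Suc by (simp add: field_simps)
  finally show ?case .
qed

lemma sgn_mult_sum_offsets:
  fixes k N :: nat
  shows "sgn (real N - real k) * (\<Sum>i\<in>{min k N + 1..max k N}. real i - real N)
        = - (real N - real k)\<^sup>2 / 2 + (real N - real k) / 2"
proof (cases "k \<le> N")
  case True
  define d where "d = N - k"
  have N: "N = k + d" using True by (simp add: d_def)
  have "(\<Sum>i\<in>{k+1..k+d}. real i - real N) = (\<Sum>i\<in>{k+1..k+d}. (real i - real k) - real d)"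
    by (intro sum.cong) (auto simp: N)
  also have "\<dots> = (\<Sum>i\<in>{k+1..k+d}. real i - real k) - (\<Sum>i\<in>{k+1..k+d}. real d)"
    by (rule sum_subtractf)
  also have "\<dots> = real d * (real d + 1) / 2 - real d * real d"
    by (simp only: sum_offsets_from_base sum_constant card_atLeastAtMost) simp
  finally have S: "(\<Sum>i\<in>{k+1..k+d}. real i - real N) = real d * (real d + 1) / 2 - real d * real d" .
  show ?thesis
  proof (cases "d = 0")
    case True thus ?thesis using N by simp
  next
    case False
    hence "sgn (real N - real k) = 1" using N by simp
    thus ?thesis using S N True by (simp add: power2_eq_square field_simps)
  qed
next
  case False
  define d where "d = k - N"
  have k: "k = N + d" and d: "d > 0" using False by (auto simp: d_def)
  have S: "(\<Sum>i\<in>{N+1..N+d}. real i - real N) = real d * (real d + 1) / 2"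
    by (rule sum_offsets_from_base)
  have "sgn (real N - real k) = -1" using k d by simp
  thus ?thesis using S k by (simp add: power2_eq_square field_simps)
qed

text \<open>With \<open>N\<close> the number of sample points below \<open>xi\<close>, \<open>X\<^sub>i\<^sub>:\<^sub>n\<close> is bracketed by the grid points with
  indices \<open>i - N \<plusminus> (\<lceil>E\<rceil> + 1)\<close>.\<close>
lemma F_order_stat_approx:
  fixes X :: "nat \<Rightarrow> 'a \<Rightarrow> real" and F :: "real \<Rightarrow> real" and xg :: "int \<Rightarrow> real"
  assumes n: "n > 0" and Fmono: "mono F"
    and xg: "\<And>j. \<bar>real_of_int j\<bar> \<le> J \<Longrightarrow> F (xg j) = p + real_of_int j / real n"
    and cnt: "\<And>j. \<bar>real_of_int j\<bar> \<le> J \<Longrightarrow>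
         \<bar>real (count_le X n w (xg j)) - real (count_le X n w xi) - real_of_int j\<bar> \<le> E"
    and E0: "E \<ge> 0"
    and i: "1 \<le> i" "i \<le> n" "\<bar>real i - real (count_le X n w xi)\<bar> + E + 2 \<le> J"
  shows "\<bar>F (order_stat X n w i) - p - (real i - real (count_le X n w xi)) / n\<bar> \<le> (E + 2) / n"
proof -
  define N where "N = count_le X n w xi"
  define c where "c = \<lceil>E\<rceil>"
  have c: "E \<le> c" "c \<le> E + 1" unfolding c_def by linarith+
  define ju where "ju = (int i - int N) + c + 1"
  have ju: "\<bar>real_of_int ju\<bar> \<le> J" using i(3) c E0 unfolding ju_def N_def by (simp add: abs_le_iff; linarith)
  have "real (count_le X n w (xg ju)) \<ge> real N + ju - E" using cnt[OF ju] unfolding N_def by linarith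
  hence "i \<le> count_le X n w (xg ju)" using c by (simp add: ju_def)
  hence "order_stat X n w i \<le> xg ju" by (simp only: order_stat_le_iff[OF i(1,2)])
  hence up: "F (order_stat X n w i) \<le> p + real_of_int ju / n" using xg[OF ju] monoD[OF Fmono] by metis
  define jl where "jl = (int i - int N) - c - 1"
  have jl: "\<bar>real_of_int jl\<bar> \<le> J" using i(3) c E0 unfolding jl_def N_def by (simp add: abs_le_iff; linarith)
  have "real (count_le X n w (xg jl)) \<le> real N + jl + E" using cnt[OF jl] unfolding N_def by linarith
  hence "\<not> i \<le> count_le X n w (xg jl)" using c by (simp add: jl_def)
  hence "xg jl \<le> order_stat X n w i" using order_stat_le_iff[OF i(1,2), of X w "xg jl"] by linarith
  hence lo: "p + real_of_int jl / n \<le> F (order_stat X n w i)" using xg[OF jl] monoD[OF Fmono] by metis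
  have "real_of_int ju / n = (real i - real N) / n + (c + 1) / n"
    "real_of_int jl / n = (real i - real N) / n - (c + 1) / n"
    unfolding ju_def jl_def by (simp_all add: add_divide_distrib diff_divide_distrib)
  moreover have "(c + 1) / n \<le> (E + 2) / n" using c n by (intro divide_right_mono) auto
  ultimately show ?thesis using up lo unfolding N_def by (simp add: abs_le_iff; linarith)
qed

text \<open>Linearising \<open>G (X\<^sub>i\<^sub>:\<^sub>n) - G \<xi>\<close> as \<open>r (i - N)/n\<close> leaves the arithmetic sum of
  \<open>sgn_mult_sum_offsets\<close>, which produces the term \<open>-D\<^sup>2/2\<close>.\<close>
lemma int_mean_eq:
  fixes X :: "nat \<Rightarrow> 'a \<Rightarrow> real" and G :: "real \<Rightarrow> real" and w :: 'a and xi r :: real and n k :: nat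
  assumes n: "n > 0"
  defines "N \<equiv> count_le X n w xi"
  defines "D \<equiv> real N - real k"
  shows "int_mean G X n k xi w + (1/2) * (real N / n - real k / n)\<^sup>2 * r
    = r * D / (2 * real n ^ 2)
      + sgn D / n * (\<Sum>i\<in>{min k N + 1..max k N}. G (order_stat X n w i) - G xi - r * ((real i - real N) / n))"
proof -
  define I where "I = {min k N + 1..max k N}"
  define S where "S = (\<Sum>i\<in>I. real i - real N)"
  define Z where "Z = (\<Sum>i\<in>I. G (order_stat X n w i) - G xi - r * ((real i - real N) / n))"
  have "(\<Sum>i\<in>I. G (order_stat X n w i) - G xi) = (\<Sum>i\<in>I. r / n * (real i - real N)
      + (G (order_stat X n w i) - G xi - r * ((real i - real N) / n)))"
    by (intro sum.cong) simp_all
  also have "\<dots> = r / n * S + Z" by (simp only: sum.distrib sum_distrib_left S_def Z_def)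
  finally have "int_mean G X n k xi w = sgn D / n * (r / n * S + Z)"
    unfolding int_mean_def Let_def N_def[symmetric] D_def I_def by simp
  also have "\<dots> = r / real n ^ 2 * (sgn D * S) + sgn D / n * Z"
    using n by (simp add: field_simps power2_eq_square)
  also have "sgn D * S = - D\<^sup>2 / 2 + D / 2"
    unfolding D_def I_def S_def by (rule sgn_mult_sum_offsets)
  finally have "int_mean G X n k xi w = r / real n ^ 2 * (- D\<^sup>2 / 2 + D / 2) + sgn D / n * Z" .
  moreover have "real N / n - real k / n = D / n" unfolding D_def by (simp add: diff_divide_distrib)
  ultimately show ?thesis using n unfolding Z_def[symmetric] I_def[symmetric]
    by (simp add: field_simps power2_eq_square)
qed

lemma int_mean_remainder_le:
  fixes X :: "nat \<Rightarrow> 'a \<Rightarrow> real" and F G :: "real \<Rightarrow> real" and xg :: "int \<Rightarrow> real"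
  assumes n: "n > 0" and k: "k \<le> n" and p: "p = real k / real n"
    and Fmono: "mono F"
    and xg: "\<And>j. \<bar>real_of_int j\<bar> \<le> J \<Longrightarrow> F (xg j) = p + real_of_int j / real n"
    and cnt: "\<And>j. \<bar>real_of_int j\<bar> \<le> J \<Longrightarrow>
         \<bar>real (count_le X n w (xg j)) - real (count_le X n w xi) - real_of_int j\<bar> \<le> E"
    and J: "\<bar>real (count_le X n w xi) - real k\<bar> + E + 2 \<le> J"
    and T: "(\<bar>real (count_le X n w xi) - real k\<bar> + E + 2) / real n \<le> T"
    and taylor: "\<And>y. \<bar>F y - p\<bar> \<le> T \<Longrightarrow> \<bar>G y - G xi - r * (F y - p)\<bar> \<le> K * \<bar>F y - p\<bar> powr (3/2)"
    and K: "K \<ge> 0" and E0: "E \<ge> 0"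
  shows "\<bar>int_mean G X n k xi w + (1/2) * (real (count_le X n w xi) / real n - p)\<^sup>2 * r\<bar>
         \<le> \<bar>r\<bar> * \<bar>real (count_le X n w xi) - real k\<bar> / (2 * real n ^ 2)
           + \<bar>real (count_le X n w xi) - real k\<bar> * (\<bar>r\<bar> * (E + 2) / real n + K * T powr (3/2)) / real n"
proof -
  define N where "N = count_le X n w xi"
  define D where "D = real N - real k"
  define I where "I = {min k N + 1..max k N}"
  define e where "e i = G (order_stat X n w i) - G xi - r * ((real i - real N) / n)" for i
  define B where "B = \<bar>r\<bar> * (E + 2) / real n + K * T powr (3/2)"
  have eB: "\<bar>e i\<bar> \<le> B" if iI: "i \<in> I" for i
  proof -
    have "min k N + 1 \<le> i" "i \<le> max k N" using iI by (simp_all add: I_def)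
    moreover have "N \<le> n" unfolding N_def by (rule count_le_le)
    ultimately have i: "1 \<le> i" "i \<le> n" and iN: "\<bar>real i - real N\<bar> \<le> \<bar>D\<bar>"
      using k unfolding D_def by (auto simp: min_def max_def abs_le_iff split: if_splits)
    define u where "u = F (order_stat X n w i) - p - (real i - real N) / n"
    have u: "\<bar>u\<bar> \<le> (E + 2) / n"
      unfolding u_def N_def by (rule F_order_stat_approx[OF n Fmono xg cnt E0 i]) (use iN J in \<open>auto simp: N_def D_def\<close>)
    have "\<bar>(real i - real N) / n\<bar> \<le> \<bar>D\<bar> / n" using iN n by (simp add: abs_divide divide_right_mono)
    hence "\<bar>F (order_stat X n w i) - p\<bar> \<le> (\<bar>D\<bar> + E + 2) / n"
      using u unfolding u_def by (simp add: add_divide_distrib abs_le_iff; linarith)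
    also have "\<dots> \<le> T" using T by (simp add: D_def N_def)
    finally have FT: "\<bar>F (order_stat X n w i) - p\<bar> \<le> T" .
    have "\<bar>F (order_stat X n w i) - p\<bar> powr (3/2) \<le> T powr (3/2)" using FT by (intro powr_mono2) auto
    hence tay: "\<bar>G (order_stat X n w i) - G xi - r * (F (order_stat X n w i) - p)\<bar> \<le> K * T powr (3/2)"
      using taylor[OF FT] mult_left_mono[OF _ K] by (meson order_trans)
    have "e i = (G (order_stat X n w i) - G xi - r * (F (order_stat X n w i) - p)) + r * u"
      unfolding e_def u_def by (simp add: algebra_simps)
    moreover have "\<bar>r * u\<bar> \<le> \<bar>r\<bar> * ((E + 2) / n)" unfolding abs_mult using u by (rule mult_left_mono) simp
    ultimately show ?thesis unfolding B_def using tay by (simp add: abs_le_iff; linarith)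
  qed
  have "\<bar>sgn D / n * (\<Sum>i\<in>I. e i)\<bar> \<le> (\<Sum>i\<in>I. \<bar>e i\<bar>) / n"
    using n by (simp add: abs_mult abs_sgn_eq abs_divide divide_right_mono sum_abs)
  also have "\<dots> \<le> (\<Sum>i\<in>I. B) / n" using n by (intro divide_right_mono sum_mono eB) auto
  also have "\<dots> = \<bar>D\<bar> * B / n" unfolding I_def D_def by (cases "k \<le> N") (simp_all add: of_nat_diff)
  finally have Z: "\<bar>sgn D / n * (\<Sum>i\<in>I. e i)\<bar> \<le> \<bar>D\<bar> * B / n" .
  have "int_mean G X n k xi w + (1/2) * (real N / n - p)\<^sup>2 * r
      = r * D / (2 * real n ^ 2) + sgn D / n * (\<Sum>i\<in>I. e i)"
    using int_mean_eq[OF n, where G=G and X=X and w=w and xi=xi and k=k and r=r]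
    unfolding p N_def D_def I_def e_def by simp
  moreover have "\<bar>r * D / (2 * real n ^ 2)\<bar> = \<bar>r\<bar> * \<bar>D\<bar> / (2 * real n ^ 2)" by (simp add: abs_mult)
  ultimately show ?thesis using Z abs_triangle_ineq[of "r * D / (2 * real n ^ 2)" "sgn D / n * (\<Sum>i\<in>I. e i)"]
    unfolding N_def[symmetric] D_def[symmetric] B_def[symmetric] by linarith
qed

section \<open>Quantile functions\<close>

lemma (in prob_space) right_continuous_mono_prob_le:
  assumes "random_variable borel Z"
  shows "right_continuous_mono (\<lambda>x. prob {w\<in>space M. Z w \<le> x}) 0 1"
proof -
  interpret D: cdf_distribution "distr M borel Z"
    unfolding cdf_distribution_def using assms by simp
  have "cdf (distr M borel Z) = (\<lambda>x. prob {w\<in>space M. Z w \<le> x})"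
    using assms by (auto simp: cdf_def measure_distr vimage_def Int_def conj_commute)
  thus ?thesis using D.right_continuous_mono_axioms by simp
qed

text \<open>\<open>quantile f\<close> is the pseudo-inverse \<open>I\<close> of the locale \<open>right_continuous_mono\<close>
  from \<open>HOL-Probability.Weak_Convergence\<close>, whose Galois property \<open>pseudoinverse\<close> does the work.\<close>
context right_continuous_mono
begin

lemma quantile_le_iff: "a < u \<Longrightarrow> u < b \<Longrightarrow> quantile f u \<le> x \<longleftrightarrow> u \<le> f x"
  unfolding quantile_def by (rule pseudoinverse[symmetric])

lemma quantile_mono: "a < u \<Longrightarrow> u \<le> v \<Longrightarrow> v < b \<Longrightarrow> quantile f u \<le> quantile f v"
  unfolding quantile_def using mono_I by (auto simp: mono_on_def)

lemma mem_quantile_interval: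
  assumes "a < u0" "u1 < b" "u0 \<le> f y" "f y < u1"
  shows "y \<in> {quantile f u0..quantile f u1}"
  using quantile_le_iff[of u0 y] quantile_le_iff[of u1 y] assms by auto

lemma f_quantile:
  assumes u: "a < u" "u < b" and cont: "isCont f (quantile f u)"
  shows "f (quantile f u) = u"
proof -
  define y where "y = quantile f u"
  have "f x \<le> u" if "x < y" for x using quantile_le_iff[OF u, of x] that by (auto simp: y_def)
  hence "\<forall>\<^sub>F x in at_left y. f x \<le> u"
    using eventually_at_left_real[of "y - 1" y] by (auto elim: eventually_mono)
  moreover have "(f \<longlongrightarrow> f y) (at_left y)"
    using cont unfolding y_def isCont_def by (auto intro: tendsto_mono[OF at_le])
  ultimately have "f y \<le> u" using tendsto_upperbound trivial_limit_at_left_real by blast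
  moreover have "u \<le> f y" using quantile_le_iff[OF u, of y] by (simp add: y_def)
  ultimately show ?thesis unfolding y_def by simp
qed

text \<open>A flat stretch of \<open>f\<close> to the right of the quantile would make the derivative there vanish.\<close>
lemma quantile_f:
  assumes x: "a < f x" "f x < b"
    and d: "(f has_real_derivative d) (at (quantile f (f x)))" "d > 0"
  shows "quantile f (f x) = x"
proof (rule ccontr)
  define y where "y = quantile f (f x)"
  assume "quantile f (f x) \<noteq> x"
  hence "y < x" using quantile_le_iff[OF x] unfolding y_def by (metis order_le_less order_refl)
  have fy: "f y = f x" unfolding y_def using d(1) x by (intro f_quantile) (auto intro: DERIV_isCont)
  have "f z \<le> f y" if "\<bar>y - z\<bar> < x - y" for z
    using that fy monoD[OF mono, of z y] monoD[OF mono, of z x] by (cases "z \<le> y") auto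
  hence "d = 0" using d(1)[folded y_def] \<open>y < x\<close> by (intro DERIV_local_max[of f d y "x - y"]) auto
  thus False using d(2) by simp
qed

lemma quantile_interval_subset:
  assumes U: "U \<subseteq> {a<..<b}" "{u0..u1} \<subseteq> U" "u0 \<le> u1"
    and deriv: "\<And>x. x \<in> quantile f ` U \<Longrightarrow> (f has_real_derivative f' x) (at x) \<and> f' x > 0"
  shows "{quantile f u0..quantile f u1} \<subseteq> quantile f ` U"
proof
  fix x assume x: "x \<in> {quantile f u0..quantile f u1}"
  have u01: "u0 \<in> U" "u1 \<in> U" using U by auto
  have fq: "f (quantile f u) = u" if "u \<in> U" for u
    using that U deriv[of "quantile f u"] by (intro f_quantile) (auto intro: DERIV_isCont)
  have "f (quantile f u0) \<le> f x" "f x \<le> f (quantile f u1)" using x monoD[OF mono] by auto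
  hence fx: "f x \<in> U" using U fq[OF u01(1)] fq[OF u01(2)] by auto
  hence "quantile f (f x) = x" using U deriv[of "quantile f (f x)"] by (intro quantile_f) auto
  with fx show "x \<in> quantile f ` U" by (metis image_eqI)
qed

lemma quantile_grid:
  fixes n J :: nat and j :: int
  assumes FQ: "\<And>u. u \<in> {lo..hi} \<Longrightarrow> f (quantile f u) = u"
    and window: "{lo..hi} \<subseteq> {a<..<b}" "lo < p - r" "p + r < hi"
    and J: "real J \<le> r * real n" and n: "n > 0" and j: "\<bar>real_of_int j\<bar> \<le> real J"
  shows "f (quantile f (p + j / n)) = p + j / n"
    and "0 \<le> j \<Longrightarrow> quantile f p \<le> quantile f (p + j / n)"
    and "j \<le> 0 \<Longrightarrow> quantile f (p + j / n) \<le> quantile f p"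
proof -
  have "\<bar>real_of_int j / real n\<bar> \<le> r" using j J n by (simp add: abs_divide field_simps)
  hence grid: "p + j / n \<in> {lo<..<hi}" using window(2,3) unfolding abs_le_iff by auto
  have "0 \<le> r * real n" using J of_nat_0_le_iff order_trans by blast
  hence "0 \<le> r" using n by (simp add: zero_le_mult_iff)
  hence "p \<in> {lo<..<hi}" using window(2,3) by auto
  hence "p \<in> {lo..hi}" "p + j / n \<in> {lo..hi}" using grid by auto
  hence ab: "a < p" "p < b" "a < p + j / n" "p + j / n < b" using window(1) by auto
  show "f (quantile f (p + j / n)) = p + j / n" using grid by (intro FQ) auto
  show "0 \<le> j \<Longrightarrow> quantile f p \<le> quantile f (p + j / n)" using ab n by (intro quantile_mono) auto
  show "j \<le> 0 \<Longrightarrow> quantile f (p + j / n) \<le> quantile f p"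
    using ab n by (intro quantile_mono) (auto simp: divide_nonpos_pos)
qed

end

section \<open>Expansion of G in the probability scale\<close>

lemma holder_on_weaken:
  assumes H: "holder_on S \<alpha> h" and \<beta>: "0 \<le> \<beta>" "\<beta> \<le> \<alpha>" and W: "W \<subseteq> S" "W \<subseteq> {xa..xb}"
  shows "\<exists>L\<ge>0. \<forall>x\<in>W. \<forall>y\<in>W. \<bar>h x - h y\<bar> \<le> L * \<bar>x - y\<bar> powr \<beta>"
proof -
  obtain L0 where L0: "\<And>x y. x \<in> S \<Longrightarrow> y \<in> S \<Longrightarrow> \<bar>h x - h y\<bar> \<le> L0 * \<bar>x - y\<bar> powr \<alpha>"
    using H unfolding holder_on_def by blast
  define L where "L = max L0 0 * (xb - xa + 1) powr (\<alpha> - \<beta>)"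
  have "\<bar>h x - h y\<bar> \<le> L * \<bar>x - y\<bar> powr \<beta>" if xy: "x \<in> W" "y \<in> W" for x y
  proof -
    define t where "t = \<bar>x - y\<bar>"
    have "x \<in> {xa..xb}" "y \<in> {xa..xb}" using xy W by auto
    hence "t \<le> xb - xa + 1" by (auto simp: t_def abs_le_iff)
    hence "t powr \<beta> * t powr (\<alpha> - \<beta>) \<le> t powr \<beta> * (xb - xa + 1) powr (\<alpha> - \<beta>)"
      using \<beta> by (intro mult_left_mono powr_mono2) (auto simp: t_def)
    hence "t powr \<alpha> \<le> t powr \<beta> * (xb - xa + 1) powr (\<alpha> - \<beta>)" by (simp add: powr_add[symmetric])
    hence "max L0 0 * t powr \<alpha> \<le> L * t powr \<beta>"
      unfolding L_def by (simp add: mult_left_mono mult.assoc mult.commute[of "t powr \<beta>"])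
    moreover have "\<bar>h x - h y\<bar> \<le> L0 * t powr \<alpha>" using L0[of x y] xy W by (auto simp: t_def)
    moreover have "L0 * t powr \<alpha> \<le> max L0 0 * t powr \<alpha>" by (intro mult_right_mono) auto
    ultimately show ?thesis unfolding t_def by linarith
  qed
  moreover have "L \<ge> 0" unfolding L_def by simp
  ultimately show ?thesis by blast
qed

lemma holder_continuous_on:
  assumes \<beta>: "0 < \<beta>" and L: "0 \<le> L"
    and H: "\<And>x y. x \<in> W \<Longrightarrow> y \<in> W \<Longrightarrow> \<bar>h x - h y\<bar> \<le> L * \<bar>x - y\<bar> powr \<beta>"
  shows "continuous_on W (h :: real \<Rightarrow> real)"
  unfolding continuous_on_iff
proof (intro ballI allI impI)
  fix x e :: real assume x: "x \<in> W" and e: "0 < e"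
  define d where "d = (e / (L + 1)) powr (1 / \<beta>)"
  show "\<exists>d>0. \<forall>x'\<in>W. dist x' x < d \<longrightarrow> dist (h x') (h x) < e"
  proof (intro exI[of _ d] conjI ballI impI)
    show "d > 0" using e L by (simp add: d_def)
    fix x' assume x': "x' \<in> W" and "dist x' x < d"
    hence "\<bar>x' - x\<bar> powr \<beta> < d powr \<beta>" using \<beta> by (intro powr_less_mono2) (auto simp: dist_real_def)
    also have "d powr \<beta> = e / (L + 1)" using e L \<beta> by (simp add: d_def powr_powr)
    finally have "(L + 1) * \<bar>x' - x\<bar> powr \<beta> < e" using L by (simp add: field_simps)
    moreover have "\<bar>h x' - h x\<bar> \<le> (L + 1) * \<bar>x' - x\<bar> powr \<beta>"
      using H[OF x' x] by (smt (verit) mult_right_mono powr_ge_zero)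
    ultimately show "dist (h x') (h x) < e" by (simp add: dist_real_def)
  qed
qed

lemma MVT_between:
  fixes \<phi> \<phi>' :: "real \<Rightarrow> real"
  assumes "y \<noteq> \<xi>"
    and d: "\<And>x. min y \<xi> \<le> x \<Longrightarrow> x \<le> max y \<xi> \<Longrightarrow> (\<phi> has_real_derivative \<phi>' x) (at x)"
  shows "\<exists>c. min y \<xi> < c \<and> c < max y \<xi> \<and> \<phi> y - \<phi> \<xi> = (y - \<xi>) * \<phi>' c"
proof (cases "y < \<xi>")
  case True
  obtain c where "y < c" "c < \<xi>" "\<phi> \<xi> - \<phi> y = (\<xi> - y) * \<phi>' c"
    using MVT2[of y \<xi> \<phi> \<phi>'] True d by auto
  thus ?thesis using True by (intro exI[of _ c]) (auto simp: algebra_simps)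
next
  case False
  hence "\<xi> < y" using assms(1) by auto
  then obtain c where "\<xi> < c" "c < y" "\<phi> y - \<phi> \<xi> = (y - \<xi>) * \<phi>' c"
    using MVT2[of \<xi> y \<phi> \<phi>'] d by auto
  thus ?thesis using \<open>\<xi> < y\<close> by (intro exI[of _ c]) auto
qed

text \<open>Both mean value points lie within \<open>|y - \<xi>|\<close> of \<open>\<xi>\<close>, so the Hoelder conditions make the
  linearisation error \<open>O(|y - \<xi>|\<^sup>3\<^sup>/\<^sup>2)\<close>; since \<open>f \<ge> m\<close>, \<open>|y - \<xi>| \<le> |F y - F \<xi>| / m\<close>.\<close>
lemma expansion_in_F_scale:
  fixes F G f g :: "real \<Rightarrow> real"
  assumes dF: "\<And>x. xa \<le> x \<Longrightarrow> x \<le> xb \<Longrightarrow> (F has_real_derivative f x) (at x)"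
    and dG: "\<And>x. xa \<le> x \<Longrightarrow> x \<le> xb \<Longrightarrow> (G has_real_derivative g x) (at x)"
    and m: "0 < m" and fm: "\<And>x. xa \<le> x \<Longrightarrow> x \<le> xb \<Longrightarrow> m \<le> f x"
    and Hf: "\<And>x y. xa \<le> x \<Longrightarrow> x \<le> xb \<Longrightarrow> xa \<le> y \<Longrightarrow> y \<le> xb \<Longrightarrow> \<bar>f x - f y\<bar> \<le> Lf * \<bar>x - y\<bar> powr (1/2)"
    and Hg: "\<And>x y. xa \<le> x \<Longrightarrow> x \<le> xb \<Longrightarrow> xa \<le> y \<Longrightarrow> y \<le> xb \<Longrightarrow> \<bar>g x - g y\<bar> \<le> Lg * \<bar>x - y\<bar> powr (1/2)"
    and Lf: "0 \<le> Lf" and Lg: "0 \<le> Lg"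
    and Mg: "\<bar>g \<xi>\<bar> \<le> Mg"
    and \<xi>: "xa \<le> \<xi>" "\<xi> \<le> xb" and y: "xa \<le> y" "y \<le> xb"
  shows "\<bar>G y - G \<xi> - (g \<xi> / f \<xi>) * (F y - F \<xi>)\<bar>
           \<le> ((Lg + Mg * Lf / m) / m powr (3/2)) * \<bar>F y - F \<xi>\<bar> powr (3/2)"
proof (cases "y = \<xi>")
  case True thus ?thesis by simp
next
  case False
  have inW: "xa \<le> z \<and> z \<le> xb" if "min y \<xi> \<le> z" "z \<le> max y \<xi>" for z
    using that \<xi> y by auto
  obtain c where c: "min y \<xi> < c" "c < max y \<xi>" "G y - G \<xi> = (y - \<xi>) * g c"
    using MVT_between[OF False, of G g] dG inW by blast
  obtain d where d: "min y \<xi> < d" "d < max y \<xi>" "F y - F \<xi> = (y - \<xi>) * f d"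
    using MVT_between[OF False, of F f] dF inW by blast
  define t where "t = \<bar>y - \<xi>\<bar>"
  define K0 where "K0 = Lg + Mg * Lf / m"
  have t0: "t > 0" using False by (simp add: t_def)
  have fxi: "m \<le> f \<xi>" and fd: "m \<le> f d" using fm \<xi> inW d by auto
  have K0: "0 \<le> K0" using Lg Lf m Mg unfolding K0_def by (smt (verit) divide_nonneg_pos mult_nonneg_nonneg)
  have "\<bar>c - \<xi>\<bar> powr (1/2) \<le> t powr (1/2)" "\<bar>d - \<xi>\<bar> powr (1/2) \<le> t powr (1/2)"
    using c d unfolding t_def by (auto intro!: powr_mono2)
  hence hc: "\<bar>g c - g \<xi>\<bar> \<le> Lg * t powr (1/2)" and hd: "\<bar>f d - f \<xi>\<bar> \<le> Lf * t powr (1/2)"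
    using Hg[of c \<xi>] Hf[of d \<xi>] inW c d \<xi> mult_left_mono[OF _ Lg] mult_left_mono[OF _ Lf]
    by (meson less_imp_le order_trans)+
  define r where "r = g \<xi> / f \<xi>"
  have "g \<xi> = r * f \<xi>" using fxi m by (simp add: r_def)
  hence "G y - G \<xi> - r * (F y - F \<xi>) = (y - \<xi>) * ((g c - g \<xi>) - r * (f d - f \<xi>))"
    unfolding c(3) d(3) by (simp add: algebra_simps)
  hence "\<bar>G y - G \<xi> - r * (F y - F \<xi>)\<bar> \<le> t * (\<bar>g c - g \<xi>\<bar> + \<bar>r\<bar> * \<bar>f d - f \<xi>\<bar>)"
    unfolding t_def abs_mult[symmetric] by (simp add: abs_mult mult_left_mono abs_triangle_ineq4[THEN order_trans])
  also have "\<dots> \<le> t * (Lg * t powr (1/2) + (Mg / m) * (Lf * t powr (1/2)))"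
    using hc hd t0 Mg fxi m by (intro mult_left_mono add_mono mult_mono) (auto simp: r_def abs_divide frac_le)
  also have "\<dots> = t * (K0 * t powr (1/2))" unfolding K0_def by (simp add: algebra_simps)
  also have "\<dots> = K0 * t powr (3/2)"
    using powr_add[of t 1 "1/2"] t0 by simp
  also have "\<dots> \<le> K0 * (\<bar>F y - F \<xi>\<bar> / m) powr (3/2)"
  proof -
    have "m * t \<le> \<bar>F y - F \<xi>\<bar>" using d(3) fd m t0 by (simp add: t_def abs_mult mult_right_mono)
    thus ?thesis using m t0 K0 by (intro mult_left_mono powr_mono2) (auto simp: field_simps)
  qed
  finally show ?thesis using m by (simp add: powr_divide K0_def r_def)
qed

lemma continuous_on_Icc_bounds:
  fixes h k :: "real \<Rightarrow> real"
  assumes "continuous_on {xa..xb} h" "continuous_on {xa..xb} k" "\<And>x. x \<in> {xa..xb} \<Longrightarrow> h x > 0"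
  obtains m M where "m > 0" "\<And>x. x \<in> {xa..xb} \<Longrightarrow> m \<le> h x" "\<And>x. x \<in> {xa..xb} \<Longrightarrow> \<bar>k x\<bar> \<le> M"
proof -
  obtain M where M: "\<And>x. x \<in> {xa..xb} \<Longrightarrow> \<bar>k x\<bar> \<le> M"
    using compact_imp_bounded[OF compact_continuous_image[OF assms(2) compact_Icc]]
    unfolding bounded_real by (metis image_eqI)
  show thesis
  proof (cases "xa \<le> xb")
    case True
    then obtain x0 where "x0 \<in> {xa..xb}" "\<And>x. x \<in> {xa..xb} \<Longrightarrow> h x0 \<le> h x"
      using continuous_attains_inf[OF compact_Icc _ assms(1)] by auto
    thus thesis using that[of "h x0" M] M assms(3) by blast
  qed (use that[of 1 M] M in auto)
qed

text \<open>On a compact window of probability levels inside \<open>U\<close>, the density is bounded below and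
  \<open>g\<close> is bounded, which makes the constants of \<open>expansion_in_F_scale\<close> uniform.\<close>
lemma uniform_expansion:
  fixes F G f g :: "real \<Rightarrow> real"
  assumes rcm: "right_continuous_mono F 0 1"
    and U: "U \<subseteq> {0<..<1}" "{u0..u1} \<subseteq> U" "u0 \<le> u1"
    and f_deriv: "\<And>x. x \<in> quantile F ` U \<Longrightarrow> (F has_real_derivative f x) (at x) \<and> f x > 0"
    and g_deriv: "\<And>x. x \<in> quantile F ` U \<Longrightarrow> (G has_real_derivative g x) (at x)"
    and alpha: "\<alpha> \<ge> 1/2"
    and f_holder: "holder_on (quantile F ` U) \<alpha> f"
    and g_holder: "holder_on (quantile F ` U) \<alpha> g"
  obtains K Mm where "K \<ge> 0" "Mm \<ge> 0"
    and "\<And>p. p \<in> {u0..u1} \<Longrightarrow> F (quantile F p) = p"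
    and "\<And>p. p \<in> {u0..u1} \<Longrightarrow> \<bar>g (quantile F p) / f (quantile F p)\<bar> \<le> Mm"
    and "\<And>p y. p \<in> {u0..u1} \<Longrightarrow> F y \<in> {u0..<u1} \<Longrightarrow>
           \<bar>G y - G (quantile F p) - (g (quantile F p) / f (quantile F p)) * (F y - p)\<bar>
             \<le> K * \<bar>F y - p\<bar> powr (3/2)"
proof -
  interpret right_continuous_mono F 0 1 by (rule rcm)
  define xa where "xa = quantile F u0"
  define xb where "xb = quantile F u1"
  have "u0 \<in> U" "u1 \<in> U" using U(2,3) by auto
  hence u01: "0 < u0" "u1 < 1" using U(1) by auto
  have W: "{xa..xb} \<subseteq> quantile F ` U"
    unfolding xa_def xb_def by (rule quantile_interval_subset[OF U f_deriv])
  have inW: "quantile F p \<in> {xa..xb}" if "p \<in> {u0..u1}" for p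
    using that u01 unfolding xa_def xb_def by (auto intro!: quantile_mono)
  have FQ: "F (quantile F p) = p" if "p \<in> {u0..u1}" for p
  proof -
    have "p \<in> U" using that U(2) by auto
    thus ?thesis using U(1) f_deriv[of "quantile F p"] by (intro f_quantile) (auto intro: DERIV_isCont)
  qed
  obtain Lf where Lf: "Lf \<ge> 0" "\<forall>x\<in>{xa..xb}. \<forall>y\<in>{xa..xb}. \<bar>f x - f y\<bar> \<le> Lf * \<bar>x - y\<bar> powr (1/2)"
    using holder_on_weaken[OF f_holder _ alpha W order_refl] by auto
  obtain Lg where Lg: "Lg \<ge> 0" "\<forall>x\<in>{xa..xb}. \<forall>y\<in>{xa..xb}. \<bar>g x - g y\<bar> \<le> Lg * \<bar>x - y\<bar> powr (1/2)"
    using holder_on_weaken[OF g_holder _ alpha W order_refl] by auto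
  obtain m Mg where m: "m > 0" "\<And>x. x \<in> {xa..xb} \<Longrightarrow> m \<le> f x"
    and Mg: "\<And>x. x \<in> {xa..xb} \<Longrightarrow> \<bar>g x\<bar> \<le> Mg"
    using continuous_on_Icc_bounds[of xa xb f g] f_deriv W Lf Lg
    by (metis holder_continuous_on subsetD zero_less_divide_1_iff zero_less_numeral)
  have Mg0: "Mg \<ge> 0" using Mg[OF inW[of u0]] U(3) by auto
  show thesis
  proof
    show "(Lg + Mg * Lf / m) / m powr (3/2) \<ge> 0" using Lf Lg m Mg0 by simp
    show "Mg / m \<ge> 0" using m Mg0 by simp
    show "F (quantile F p) = p" if "p \<in> {u0..u1}" for p using FQ[OF that] .
    show "\<bar>g (quantile F p) / f (quantile F p)\<bar> \<le> Mg / m" if "p \<in> {u0..u1}" for p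
      using m Mg[OF inW[OF that]] m(2)[OF inW[OF that]] by (simp add: abs_divide frac_le)
    show "\<bar>G y - G (quantile F p) - (g (quantile F p) / f (quantile F p)) * (F y - p)\<bar>
        \<le> (Lg + Mg * Lf / m) / m powr (3/2) * \<bar>F y - p\<bar> powr (3/2)"
      if p: "p \<in> {u0..u1}" and y: "F y \<in> {u0..<u1}" for p y
    proof -
      have "y \<in> {xa..xb}" unfolding xa_def xb_def using y u01 by (intro mem_quantile_interval) auto
      moreover have "(F has_real_derivative f x) (at x)" "(G has_real_derivative g x) (at x)"
        if "xa \<le> x" "x \<le> xb" for x
        using that W f_deriv[of x] g_deriv[of x] by auto
      ultimately show ?thesis
        using expansion_in_F_scale[of xa xb F f G g m Lf Lg "quantile F p" Mg y] m Lf Lg Mg inW[OF p]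
        unfolding FQ[OF p] by auto
    qed
  qed
qed

section \<open>The good event\<close>

lemma ln_over_n_bounds:
  fixes n :: nat
  assumes n3: "n \<ge> 3"
  defines "L \<equiv> ln (real n) / real n"
  shows "0 < L" "L \<le> 1" "1 / real n \<le> L" "real n * L = ln (real n)" "ln (real n) \<ge> 1"
proof -
  have n0: "real n > 0" using n3 by simp
  have "exp 1 \<le> real n" using exp_le n3 by linarith
  thus l1: "ln (real n) \<ge> 1" using n0 by (simp add: ln_ge_iff)
  show "0 < L" unfolding L_def using l1 n0 by (intro divide_pos_pos) linarith+
  have "ln (real n) \<le> real n - 1" using ln_le_minus_one n0 by blast
  thus "L \<le> 1" using n0 by (simp add: L_def field_simps)
  show "1 / real n \<le> L" using l1 n0 by (simp add: L_def divide_right_mono)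
  show "real n * L = ln (real n)" using n0 by (simp add: L_def)
qed

lemma quarter_powers:
  fixes L :: real and n :: real
  assumes L: "0 < L" "L \<le> 1" "1 / n \<le> L" and n: "n \<ge> 1"
  shows "L powr (3/4) \<le> L powr (1/2)" "1 / n \<le> L powr (3/4)" "0 \<le> L powr (3/4)"
    "L powr (1/2) * L powr (3/4) = L powr (5/4)"
    "L powr (1/2) * (L powr (1/2)) powr (3/2) = L powr (5/4)"
    "(L powr (3/4))\<^sup>2 = L * L powr (1/2)"
    "(L powr (1/2))\<^sup>2 = L"
    "L powr (1/2) \<le> 1"
proof -
  show "L powr (3/4) \<le> L powr (1/2)" using L by (intro powr_mono') auto
  have "1 / n \<le> 1" using n by simp
  have "(1/n) powr 1 \<le> (1/n) powr (3/4)" using n by (intro powr_mono') auto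
  also have "\<dots> \<le> L powr (3/4)" using L n by (intro powr_mono2) auto
  finally show "1 / n \<le> L powr (3/4)" using n by simp
  show "0 \<le> L powr (3/4)" by simp
  show "L powr (1/2) * L powr (3/4) = L powr (5/4)"
    by (simp add: powr_add[symmetric])
  show "L powr (1/2) * (L powr (1/2)) powr (3/2) = L powr (5/4)"
    by (simp add: powr_powr powr_add[symmetric])
  show "(L powr (3/4))\<^sup>2 = L * L powr (1/2)"
  proof -
    have "(L powr (3/4))\<^sup>2 = L powr (3/4) * L powr (3/4)" by (simp add: power2_eq_square)
    also have "\<dots> = L powr (1 + 1/2)" by (simp add: powr_add[symmetric])
    also have "\<dots> = L powr 1 * L powr (1/2)" by (rule powr_add)
    also have "\<dots> = L * L powr (1/2)" using L by simp
    finally show ?thesis .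
  qed
  show "(L powr (1/2))\<^sup>2 = L" using L by (simp add: powr_half_sqrt)
  show "L powr (1/2) \<le> 1" using L by (simp add: powr_half_sqrt)
qed

lemma grid_size_bounds:
  fixes n :: nat and c1 c2 :: real
  assumes n3: "n \<ge> 3" and c: "c1 \<ge> 0" "c2 \<ge> 0"
  defines "s1 \<equiv> (ln (real n) / real n) powr (1/2)"
  defines "J \<equiv> nat \<lceil>(c1 + c2) * real n * s1\<rceil> + 2"
  shows "(c1 + c2) * real n * s1 + 2 \<le> real J" "real J \<le> (c1 + c2 + 3) * real n * s1"
proof -
  have n0: "real n > 0" using n3 by simp
  have Lf: "0 < ln (real n) / real n" "real n * (ln (real n) / real n) = ln (real n)" "ln (real n) \<ge> 1"
    using ln_over_n_bounds[OF n3] by auto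
  have s1sq: "s1\<^sup>2 = ln (real n) / real n" and s1: "0 < s1"
    using Lf unfolding s1_def by (auto simp: powr_half_sqrt)
  have "(real n * s1)\<^sup>2 = real n * (real n * s1\<^sup>2)" by (simp add: power2_eq_square algebra_simps)
  also have "\<dots> = real n * ln (real n)" using s1sq Lf(2) by simp
  also have "\<dots> \<ge> 1\<^sup>2" using n3 Lf(3) mult_mono[of 1 "real n" 1 "ln (real n)"] by simp
  finally have ns1: "1 \<le> real n * s1" using power2_le_imp_le[of 1 "real n * s1"] n0 s1 by simp
  have nn: "0 \<le> (c1 + c2) * real n * s1" using c n0 s1 by simp
  show "(c1 + c2) * real n * s1 + 2 \<le> real J"
    unfolding J_def using le_of_int_ceiling[of "(c1 + c2) * real n * s1"] nn by linarith
  have "real J \<le> (c1 + c2) * real n * s1 + 3"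
    unfolding J_def using of_int_ceiling_le_add_one[of "(c1 + c2) * real n * s1"] nn by linarith
  also have "\<dots> \<le> (c1 + c2 + 3) * real n * s1" using ns1 by (simp add: algebra_simps)
  finally show "real J \<le> (c1 + c2 + 3) * real n * s1" .
qed

text \<open>The deviation scales are tuned so that both Chernoff exponents are at least
  \<open>c ln n\<close>; for the grid this uses \<open>c\<^sub>2\<^sup>2 - 4 (c + 1)(c\<^sub>1 + c\<^sub>2 + 3) = (c\<^sub>1 + 3)\<^sup>2\<close>.\<close>
lemma chernoff_exponents:
  fixes n :: nat and c :: real
  assumes n3: "n \<ge> 3" and c: "c > 0"
  defines "c1 \<equiv> 2 * sqrt c" and "c2 \<equiv> 4 * (c + 1) + 2 * sqrt c + 3"
  defines "s1 \<equiv> (ln (real n) / real n) powr (1/2)" and "s2 \<equiv> (ln (real n) / real n) powr (3/4)"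
  defines "J \<equiv> nat \<lceil>(c1 + c2) * real n * s1\<rceil> + 2"
  shows "exp (-((c1 * real n * s1)\<^sup>2) / (4 * real n)) = real n powr (- c)"
    and "real J * exp (-((c2 * real n * s2)\<^sup>2) / (4 * real J)) \<le> (c1 + c2 + 3) * real n powr (- c)"
proof -
  define L where "L = ln (real n) / real n"
  define c3 where "c3 = c1 + c2 + 3"
  have n0: "real n > 0" using n3 by simp
  have Lf: "0 < L" "L \<le> 1" "1 / real n \<le> L" "real n * L = ln (real n)" "ln (real n) \<ge> 1"
    using ln_over_n_bounds[OF n3] unfolding L_def by auto
  note sf = quarter_powers[OF Lf(1-3)] n3
  have s1sq: "s1\<^sup>2 = L" and s2sq: "s2\<^sup>2 = L * s1" and s1le: "s1 \<le> 1" and s1: "0 < s1"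
    using sf Lf unfolding s1_def s2_def L_def by auto
  have c1: "c1 > 0" "c1\<^sup>2 = 4 * c" using c unfolding c1_def by (auto simp: power_mult_distrib)
  have c2: "c2 \<ge> 0" using c unfolding c2_def by simp
  have c3: "c3 > 0" using c1 c2 unfolding c3_def by simp
  have "2 \<le> J" unfolding J_def by simp
  hence J: "real J \<le> c3 * real n * s1" "0 < real J"
    using grid_size_bounds(2)[OF n3 less_imp_le[OF c1(1)] c2, folded s1_def, folded J_def]
    unfolding c3_def by auto
  have "(c1 * real n * s1)\<^sup>2 / (4 * real n) = c * (real n * L)"
    using c1 s1sq n0 by (simp add: power_mult_distrib field_simps power2_eq_square)
  thus "exp (-((c1 * real n * s1)\<^sup>2) / (4 * real n)) = real n powr (- c)"
    using n0 Lf(4) by (simp add: powr_def)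
  have key: "c2\<^sup>2 - 4 * (c + 1) * c3 = (c1 + 3)\<^sup>2"
    unfolding c3_def c2_def c1_def by (simp add: power2_eq_square algebra_simps)
  have "c + 1 \<le> c2\<^sup>2 / (4 * c3)"
    using key zero_le_power2[of "c1 + 3"] c3 by (simp add: field_simps)
  hence "(c + 1) * ln (real n) \<le> c2\<^sup>2 / (4 * c3) * ln (real n)"
    using Lf(5) by (intro mult_right_mono) auto
  also have "\<dots> = (c2 * real n * s2)\<^sup>2 / (4 * (c3 * real n * s1))"
  proof -
    have "(c2 * real n * s2)\<^sup>2 = c2\<^sup>2 * real n * (s1 * (real n * L))"
      using s2sq by (simp add: power_mult_distrib power2_eq_square algebra_simps)
    also have "real n * L = ln (real n)" by (rule Lf(4))
    finally have sq: "(c2 * real n * s2)\<^sup>2 = c2\<^sup>2 * real n * (s1 * ln (real n))" .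
    show ?thesis unfolding sq using n0 s1 c3 by (simp add: field_simps)
  qed
  also have "\<dots> \<le> (c2 * real n * s2)\<^sup>2 / (4 * real J)"
    using J c3 n0 s1 by (intro divide_left_mono mult_left_mono) auto
  finally have "exp (-((c2 * real n * s2)\<^sup>2) / (4 * real J)) \<le> real n powr (- (c + 1))"
    using n0 by (simp add: powr_def algebra_simps)
  moreover have "c3 * real n * s1 \<le> c3 * real n" using s1le c3 n0 by (simp add: mult_left_le)
  hence "real J \<le> c3 * real n" using J(1) by linarith
  ultimately have "real J * exp (-((c2 * real n * s2)\<^sup>2) / (4 * real J)) \<le> c3 * real n * real n powr (- (c + 1))"
    using c3 n0 by (intro mult_mono) auto
  also have "\<dots> = c3 * real n powr (- c)"
    using powr_add[of "real n" 1 "- (c + 1)"] n0 by simp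
  finally show "real J * exp (-((c2 * real n * s2)\<^sup>2) / (4 * real J)) \<le> (c1 + c2 + 3) * real n powr (- c)"
    unfolding c3_def .
qed

lemma (in prob_space) grid_count_deviations:
  fixes X :: "nat \<Rightarrow> 'a \<Rightarrow> real" and F :: "real \<Rightarrow> real" and xg :: "int \<Rightarrow> real"
    and n k J :: nat and xi s E :: real
  assumes indep: "indep_vars (\<lambda>_. borel) X {1..}"
    and distF: "\<And>i x. i \<ge> 1 \<Longrightarrow> prob {w\<in>space M. X i w \<le> x} = F x"
    and n: "n > 0" and kn: "k \<le> n" and s: "0 < s" "s \<le> 2 * real n" and E: "0 < E" "E \<le> 2 * real J"
    and xg: "\<And>j. \<bar>real_of_int j\<bar> \<le> real J \<Longrightarrow> F (xg j) = real k / real n + real_of_int j / real n"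
    and xg0: "xg 0 = xi"
    and xg_mono: "\<And>j. \<bar>real_of_int j\<bar> \<le> real J \<Longrightarrow> (0 \<le> j \<longrightarrow> xi \<le> xg j) \<and> (j \<le> 0 \<longrightarrow> xg j \<le> xi)"
  obtains B where "B \<in> events"
    and "prob B \<le> 2 * exp (-(s\<^sup>2) / (4 * real n)) + 4 * real J * exp (-(E\<^sup>2) / (4 * real J))"
    and "\<And>w. w \<in> space M \<Longrightarrow> w \<notin> B \<Longrightarrow> \<bar>real (count_le X n w xi) - real k\<bar> < s"
    and "\<And>w j. w \<in> space M \<Longrightarrow> w \<notin> B \<Longrightarrow> \<bar>real_of_int j\<bar> \<le> real J \<Longrightarrow>
           \<bar>real (count_le X n w (xg j)) - real (count_le X n w xi) - real_of_int j\<bar> \<le> E"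
proof -
  have n0: "real n > 0" using n by simp
  have rv: "random_variable borel (X i)" if "i \<in> {1..n}" for i using indep that by (auto simp: indep_vars_def)
  have indn: "indep_vars (\<lambda>_. borel) X {1..n}" by (rule indep_vars_subset[OF indep]) auto
  have Fxi: "F xi = real k / real n" using xg[of 0] xg0 by simp
  have cell_prob: "prob {w\<in>space M. X i w \<in> {a<..b}} = F b - F a" if "i \<in> {1..n}" "a \<le> b" for i a b
    using that by (intro prob_Ioc_eq rv distF) auto
  have grid: "\<bar>real_of_int (int m)\<bar> \<le> real J" "\<bar>real_of_int (- int m)\<bar> \<le> real J" if "m \<in> {1..J}" for m
    using that by auto
  have fin: "finite {1..n}" "finite {()}" "finite {1..J}" by auto
  have Q0: "real (card {1..n}) * (real k / real n) \<le> real n" using kn n0 by (simp add: field_simps)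
  have Q: "real (card {1..n}) * (real m / real n) \<le> real J" if "m \<in> {1..J}" for m
    using that n0 by simp
  have q0: "prob {w\<in>space M. X i w \<in> {..xi}} = real k / real n" if "u \<in> {()}" "i \<in> {1..n}" for u i
    using that distF Fxi by simp
  have qp: "prob {w\<in>space M. X i w \<in> {xi<..xg (int m)}} = real m / real n" if "m \<in> {1..J}" "i \<in> {1..n}" for m i
    using that cell_prob xg grid xg_mono Fxi by (simp add: diff_divide_distrib)
  have qm: "prob {w\<in>space M. X i w \<in> {xg (- int m)<..xi}} = real m / real n" if "m \<in> {1..J}" "i \<in> {1..n}" for m i
    using that cell_prob xg grid xg_mono Fxi by (simp add: diff_divide_distrib)
  obtain B0 where B0: "B0 \<in> events" "prob B0 \<le> 2 * real (card {()}) * exp (-(s\<^sup>2) / (4 * real n))"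
    and good0: "\<And>w u. w \<in> space M \<Longrightarrow> w \<notin> B0 \<Longrightarrow> u \<in> {()} \<Longrightarrow>
      \<bar>real (card {i\<in>{1..n}. X i w \<in> {..xi}}) - real (card {1..n}) * (real k / real n)\<bar> < s"
    by (rule count_deviations_uniform[OF fin(1,2) indn _ q0 _ s]) (use Q0 in auto)
  obtain Bp where Bp: "Bp \<in> events" "prob Bp \<le> 2 * real (card {1..J}) * exp (-(E\<^sup>2) / (4 * real J))"
    and goodp: "\<And>w m. w \<in> space M \<Longrightarrow> w \<notin> Bp \<Longrightarrow> m \<in> {1..J} \<Longrightarrow>
      \<bar>real (card {i\<in>{1..n}. X i w \<in> {xi<..xg (int m)}}) - real (card {1..n}) * (real m / real n)\<bar> < E"
    by (rule count_deviations_uniform[OF fin(1,3) indn _ qp Q E]) auto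
  obtain Bm where Bm: "Bm \<in> events" "prob Bm \<le> 2 * real (card {1..J}) * exp (-(E\<^sup>2) / (4 * real J))"
    and goodm: "\<And>w m. w \<in> space M \<Longrightarrow> w \<notin> Bm \<Longrightarrow> m \<in> {1..J} \<Longrightarrow>
      \<bar>real (card {i\<in>{1..n}. X i w \<in> {xg (- int m)<..xi}}) - real (card {1..n}) * (real m / real n)\<bar> < E"
    by (rule count_deviations_uniform[OF fin(1,3) indn _ qm Q E]) auto
  show thesis
  proof (rule that[of "B0 \<union> Bp \<union> Bm"])
    show "B0 \<union> Bp \<union> Bm \<in> events" using B0 Bp Bm by auto
    show "prob (B0 \<union> Bp \<union> Bm) \<le> 2 * exp (-(s\<^sup>2) / (4 * real n)) + 4 * real J * exp (-(E\<^sup>2) / (4 * real J))"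
      using B0 Bp Bm measure_Un_le[of "B0 \<union> Bp" M Bm] measure_Un_le[of B0 M Bp] by auto
    show "\<bar>real (count_le X n w xi) - real k\<bar> < s" if "w \<in> space M" "w \<notin> B0 \<union> Bp \<union> Bm" for w
      using good0[of w] that n0 by (simp add: count_le_def)
    show "\<bar>real (count_le X n w (xg j)) - real (count_le X n w xi) - real_of_int j\<bar> \<le> E"
      if "w \<in> space M" "w \<notin> B0 \<union> Bp \<union> Bm" "\<bar>real_of_int j\<bar> \<le> real J" for w j
      using count_le_grid_close[OF xg0 _ xg_mono, where E = E and n = n and X = X and w = w and j = j]
        goodp[of w] goodm[of w] that E n0 by simp
  qed
qed

lemma (in prob_space) good_event_prob:
  fixes X :: "nat \<Rightarrow> 'a \<Rightarrow> real" and F :: "real \<Rightarrow> real" and xg :: "int \<Rightarrow> real"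
    and n k :: nat and c xi :: real
  defines "c1 \<equiv> 2 * sqrt c" and "c2 \<equiv> 4 * (c + 1) + 2 * sqrt c + 3"
  defines "s1 \<equiv> (ln (real n) / real n) powr (1/2)" and "s2 \<equiv> (ln (real n) / real n) powr (3/4)"
  defines "J \<equiv> nat \<lceil>(c1 + c2) * real n * s1\<rceil> + 2"
  assumes indep: "indep_vars (\<lambda>_. borel) X {1..}"
    and distF: "\<And>i x. i \<ge> 1 \<Longrightarrow> prob {w\<in>space M. X i w \<le> x} = F x"
    and n3: "n \<ge> 3" and kn: "k \<le> n" and c: "c > 0" and small: "c1 * s1 \<le> 2"
    and xg: "\<And>j. \<bar>real_of_int j\<bar> \<le> real J \<Longrightarrow> F (xg j) = real k / real n + real_of_int j / real n"
    and xg0: "xg 0 = xi"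
    and xg_mono: "\<And>j. \<bar>real_of_int j\<bar> \<le> real J \<Longrightarrow> (0 \<le> j \<longrightarrow> xi \<le> xg j) \<and> (j \<le> 0 \<longrightarrow> xg j \<le> xi)"
  obtains B where "B \<in> events" "prob B \<le> (2 + 4 * (c1 + c2 + 3)) * real n powr (- c)"
    and "\<And>w. w \<in> space M \<Longrightarrow> w \<notin> B \<Longrightarrow> \<bar>real (count_le X n w xi) - real k\<bar> < c1 * real n * s1"
    and "\<And>w j. w \<in> space M \<Longrightarrow> w \<notin> B \<Longrightarrow> \<bar>real_of_int j\<bar> \<le> real J \<Longrightarrow>
           \<bar>real (count_le X n w (xg j)) - real (count_le X n w xi) - real_of_int j\<bar> \<le> c2 * real n * s2"
proof -
  have n0: "real n > 0" using n3 by simp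
  have Lf: "0 < ln (real n) / real n" "ln (real n) / real n \<le> 1" "1 / real n \<le> ln (real n) / real n"
    using ln_over_n_bounds[OF n3] by auto
  have s21: "s2 \<le> s1" and s2: "1 / real n \<le> s2"
    using quarter_powers[OF Lf] n3 unfolding s1_def s2_def by auto
  have s2pos: "0 < s2" using s2 n0 by (meson less_le_trans divide_pos_pos zero_less_one)
  have sq: "sqrt c > 0" using c by simp
  have c1: "c1 > 0" unfolding c1_def using sq by linarith
  have c2: "c2 > 0" unfolding c2_def using c sq by (simp add: algebra_simps add_pos_pos)
  have s: "0 < c1 * real n * s1" "c1 * real n * s1 \<le> 2 * real n"
    using c1 n0 s21 s2pos small by (simp_all add: mult.commute mult_left_mono)
  have "c2 * real n * s2 \<le> (c1 + c2) * real n * s1"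
    using c1 c2 n0 s21 s2pos by (intro mult_mono) auto
  also have "\<dots> \<le> real J"
    using grid_size_bounds(1)[OF n3, of c1 c2, folded s1_def, folded J_def] c1 c2 by simp
  finally have E: "0 < c2 * real n * s2" "c2 * real n * s2 \<le> 2 * real J" using c2 n0 s2pos by simp_all
  obtain B where B: "B \<in> events"
    "prob B \<le> 2 * exp (-((c1 * real n * s1)\<^sup>2) / (4 * real n)) + 4 * real J * exp (-((c2 * real n * s2)\<^sup>2) / (4 * real J))"
    and good: "\<And>w. w \<in> space M \<Longrightarrow> w \<notin> B \<Longrightarrow> \<bar>real (count_le X n w xi) - real k\<bar> < c1 * real n * s1"
      "\<And>w j. w \<in> space M \<Longrightarrow> w \<notin> B \<Longrightarrow> \<bar>real_of_int j\<bar> \<le> real J \<Longrightarrow>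
         \<bar>real (count_le X n w (xg j)) - real (count_le X n w xi) - real_of_int j\<bar> \<le> c2 * real n * s2"
    using grid_count_deviations[OF indep distF _ kn s E xg xg0 xg_mono] n3 by auto
  have "prob B \<le> (2 + 4 * (c1 + c2 + 3)) * real n powr (- c)"
    using B(2) chernoff_exponents[OF n3 c] unfolding c1_def c2_def s1_def s2_def J_def
    by (simp add: algebra_simps)
  with B(1) good show thesis using that by blast
qed

lemma remainder_terms_le:
  fixes n :: nat and s1 s2 c1 c2 Dabs r E K T Mm :: real
  assumes n: "n > 0" and s: "0 \<le> s2" "s2 \<le> s1" "1 / n \<le> s2"
    and D: "0 \<le> Dabs" "Dabs \<le> c1 * n * s1" and r: "\<bar>r\<bar> \<le> Mm"
    and E: "E = c2 * n * s2" and T: "T = (c1 + c2 + 2) * s1" and K: "K \<ge> 0"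
    and c: "c1 \<ge> 0" "c2 \<ge> 0"
  shows "\<bar>r\<bar> * Dabs / (2 * real n ^ 2) + Dabs * (\<bar>r\<bar> * (E + 2) / real n + K * T powr (3/2)) / real n
         \<le> (Mm * c1 * (1/2 + c2 + 2)) * (s1 * s2) + c1 * K * (c1 + c2 + 2) powr (3/2) * (s1 * s1 powr (3/2))"
proof -
  define \<delta> where "\<delta> = Dabs / n"
  have \<delta>: "0 \<le> \<delta>" "\<delta> \<le> c1 * s1" using D n by (auto simp: \<delta>_def field_simps)
  have Mm: "0 \<le> Mm" using r by linarith
  have s1: "0 \<le> s1" using s by linarith
  have e1: "\<bar>r\<bar> * Dabs / (2 * real n ^ 2) = \<bar>r\<bar> * \<delta> * (1 / n) / 2"
    using n by (simp add: \<delta>_def power2_eq_square field_simps)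
  have e2: "Dabs * (\<bar>r\<bar> * (E + 2) / real n + K * T powr (3/2)) / real n
      = \<delta> * (\<bar>r\<bar> * (c2 * s2 + 2 * (1 / n))) + \<delta> * (K * T powr (3/2))"
    using n by (simp add: \<delta>_def E field_simps)
  have t1: "\<bar>r\<bar> * \<delta> * (1 / n) / 2 \<le> Mm * (c1 * s1) * s2 / 2"
    using r \<delta> s by (intro divide_right_mono mult_mono) auto
  have t2: "\<delta> * (\<bar>r\<bar> * (c2 * s2 + 2 * (1 / n))) \<le> (c1 * s1) * (Mm * (c2 * s2 + 2 * s2))"
    using r \<delta> s c Mm by (intro mult_mono add_mono) auto
  have Tp: "T powr (3/2) = (c1 + c2 + 2) powr (3/2) * s1 powr (3/2)"
    unfolding T using c s1 by (simp add: powr_mult)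
  have t3: "\<delta> * (K * T powr (3/2)) \<le> (c1 * s1) * (K * T powr (3/2))"
    using \<delta> K by (intro mult_right_mono) auto
  have "\<bar>r\<bar> * Dabs / (2 * real n ^ 2) + Dabs * (\<bar>r\<bar> * (E + 2) / real n + K * T powr (3/2)) / real n
      \<le> Mm * (c1 * s1) * s2 / 2 + (c1 * s1) * (Mm * (c2 * s2 + 2 * s2)) + (c1 * s1) * (K * T powr (3/2))"
    unfolding e1 e2 using t1 t2 t3 by linarith
  also have "\<dots> = (Mm * c1 * (1/2 + c2 + 2)) * (s1 * s2) + c1 * K * (c1 + c2 + 2) powr (3/2) * (s1 * s1 powr (3/2))"
    unfolding Tp by (simp add: algebra_simps)
  finally show ?thesis .
qed

lemma remainder_le_on_good_event:
  fixes X :: "nat \<Rightarrow> 'a \<Rightarrow> real" and F G :: "real \<Rightarrow> real" and xg :: "int \<Rightarrow> real"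
    and n k J :: nat and c1 c2 :: real
  defines "L \<equiv> ln (real n) / real n"
  defines "s1 \<equiv> L powr (1/2)" and "s2 \<equiv> L powr (3/4)"
  assumes n3: "n \<ge> 3" and kn: "k \<le> n" and Fmono: "mono F" and c: "c1 \<ge> 0" "c2 \<ge> 0"
    and J: "(c1 + c2) * real n * s1 + 2 \<le> real J"
    and xg: "\<And>j. \<bar>real_of_int j\<bar> \<le> real J \<Longrightarrow> F (xg j) = real k / real n + real_of_int j / real n"
    and Fxi: "F xi = real k / real n"
    and taylor: "\<And>y. \<bar>F y - real k / real n\<bar> \<le> (c1 + c2 + 2) * s1 \<Longrightarrow>
      \<bar>G y - G xi - r * (F y - real k / real n)\<bar> \<le> K * \<bar>F y - real k / real n\<bar> powr (3/2)"
    and r: "\<bar>r\<bar> \<le> Mm" and K: "K \<ge> 0"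
    and dev: "\<bar>real (count_le X n w xi) - real k\<bar> < c1 * real n * s1"
    and cnt: "\<And>j. \<bar>real_of_int j\<bar> \<le> real J \<Longrightarrow>
      \<bar>real (count_le X n w (xg j)) - real (count_le X n w xi) - real_of_int j\<bar> \<le> c2 * real n * s2"
  shows "\<bar>int_mean G X n k xi w + (1/2) * (ecdf X n w xi - F xi)\<^sup>2 * r\<bar>
         \<le> (Mm * c1 * (1/2 + c2 + 2) + c1 * K * (c1 + c2 + 2) powr (3/2)) * L powr (5/4)"
proof -
  define D where "D = \<bar>real (count_le X n w xi) - real k\<bar>"
  define E where "E = c2 * real n * s2"
  define T where "T = (c1 + c2 + 2) * s1"
  have n0: "real n > 0" using n3 by simp
  have Lf: "0 < L" "L \<le> 1" "1 / real n \<le> L" using ln_over_n_bounds[OF n3] unfolding L_def by auto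
  note sf = quarter_powers[OF Lf] n3
  have s21: "s2 \<le> s1" and s2n: "1 / real n \<le> s2" and s20: "0 \<le> s2"
    using sf unfolding s1_def s2_def by auto
  have E: "0 \<le> E" "E \<le> c2 * real n * s1" unfolding E_def using c s20 s21 n0 by (simp_all add: mult_left_mono)
  have "D + E + 2 \<le> (c1 + c2) * real n * s1 + 2" using dev E unfolding D_def by (simp add: algebra_simps)
  hence JD: "D + E + 2 \<le> real J" using J by linarith
  have "(D + E + 2) / real n \<le> ((c1 + c2) * real n * s1 + 2) / real n"
    using dev E n0 unfolding D_def by (intro divide_right_mono) (simp_all add: algebra_simps)
  also have "\<dots> \<le> T"
  proof -
    have "1 \<le> s2 * real n" using s2n n0 by (simp add: divide_le_eq)
    also have "\<dots> \<le> s1 * real n" using s21 n0 by (simp add: mult_right_mono)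
    finally have "1 \<le> s1 * real n" .
    thus ?thesis using n0 unfolding T_def by (simp add: field_simps)
  qed
  finally have TD: "(D + E + 2) / real n \<le> T" .
  have "\<bar>int_mean G X n k xi w + (1/2) * (ecdf X n w xi - F xi)\<^sup>2 * r\<bar>
      \<le> \<bar>r\<bar> * D / (2 * real n ^ 2) + D * (\<bar>r\<bar> * (E + 2) / real n + K * T powr (3/2)) / real n"
    using int_mean_remainder_le[OF _ kn refl Fmono, where J = "real J" and xg = xg and E = E and X = X and w = w
        and xi = xi and T = T and G = G and r = r and K = K] xg cnt JD TD taylor K E n0
    unfolding D_def E_def T_def by (simp add: ecdf_eq_count_le Fxi)
  also have "\<dots> \<le> (Mm * c1 * (1/2 + c2 + 2)) * (s1 * s2) + c1 * K * (c1 + c2 + 2) powr (3/2) * (s1 * s1 powr (3/2))"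
    using n0 s20 s21 s2n dev r K c unfolding D_def E_def T_def by (intro remainder_terms_le) auto
  also have "\<dots> = (Mm * c1 * (1/2 + c2 + 2) + c1 * K * (c1 + c2 + 2) powr (3/2)) * L powr (5/4)"
    using sf unfolding s1_def s2_def by (simp add: algebra_simps)
  finally show ?thesis .
qed

lemma (in prob_space) remainder_tail_bound:
  fixes X :: "nat \<Rightarrow> 'a \<Rightarrow> real" and F G :: "real \<Rightarrow> real" and n k :: nat
    and c r K Mm lo hi :: real
  defines "p \<equiv> real k / real n" and "xi \<equiv> quantile F (real k / real n)"
  defines "c1 \<equiv> 2 * sqrt c" and "c2 \<equiv> 4 * (c + 1) + 2 * sqrt c + 3"
  defines "L \<equiv> ln (real n) / real n"
  assumes indep: "indep_vars (\<lambda>_. borel) X {1..}"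
    and distF: "\<And>i x. i \<ge> 1 \<Longrightarrow> prob {w\<in>space M. X i w \<le> x} = F x"
    and rcm: "right_continuous_mono F 0 1"
    and n3: "n \<ge> 3" and kn: "k \<le> n" and c: "c > 0"
    and window: "{lo..hi} \<subseteq> {0<..<1}"
      "lo < p - (c1 + c2 + 3) * L powr (1/2)" "p + (c1 + c2 + 3) * L powr (1/2) < hi"
    and FQ: "\<And>u. u \<in> {lo..hi} \<Longrightarrow> F (quantile F u) = u"
    and expansion: "\<And>y. F y \<in> {lo..<hi} \<Longrightarrow>
      \<bar>G y - G xi - r * (F y - p)\<bar> \<le> K * \<bar>F y - p\<bar> powr (3/2)"
    and r: "\<bar>r\<bar> \<le> Mm" and K: "K \<ge> 0"
  shows "\<exists>B\<in>sets M. {w\<in>space M. \<bar>int_mean G X n k xi w + (1/2) * (ecdf X n w xi - F xi)\<^sup>2 * r\<bar>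
      > (Mm * c1 * (1/2 + c2 + 2) + c1 * K * (c1 + c2 + 2) powr (3/2)) * L powr (5/4)} \<subseteq> B
    \<and> measure M B \<le> (2 + 4 * (c1 + c2 + 3)) * real n powr (- c)"
proof -
  interpret Q: right_continuous_mono F 0 1 by (rule rcm)
  define s1 where "s1 = L powr (1/2)"
  define J where "J = nat \<lceil>(c1 + c2) * real n * s1\<rceil> + 2"
  define xg where "xg j = quantile F (p + real_of_int j / real n)" for j
  have c12: "c1 \<ge> 0" "c2 \<ge> 0" using c unfolding c1_def c2_def by simp_all
  have s1: "0 \<le> s1" unfolding s1_def by simp
  have J': "real J \<le> ((c1 + c2 + 3) * L powr (1/2)) * real n"
    using grid_size_bounds(2)[OF n3 c12] unfolding J_def s1_def L_def by (simp add: ac_simps)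
  have npos: "n > 0" using n3 by simp
  have xg: "F (xg j) = p + real_of_int j / real n" if "\<bar>real_of_int j\<bar> \<le> real J" for j
    using Q.quantile_grid(1)[OF FQ window J' npos that] unfolding xg_def .
  have xg0: "xg 0 = xi" by (simp add: xg_def xi_def p_def)
  have xg_mono: "(0 \<le> j \<longrightarrow> xi \<le> xg j) \<and> (j \<le> 0 \<longrightarrow> xg j \<le> xi)" if "\<bar>real_of_int j\<bar> \<le> real J" for j
    using Q.quantile_grid(2,3)[OF FQ window J' npos that] unfolding xg_def xi_def p_def by simp
  have "0 \<le> (c1 + c2 + 3) * L powr (1/2)" using c12 by simp
  hence "lo \<le> hi" using window(2,3) by linarith
  hence lohi: "0 < lo" "hi < 1" using window(1) by auto
  have Fxi: "F xi = p" using xg[of 0] xg0 by simp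
  have "(c1 + c2 + 3) * s1 \<le> 1" using window(2,3) lohi unfolding s1_def by linarith
  hence small: "c1 * s1 \<le> 2" using c12 s1 by (simp add: algebra_simps) (smt (verit) mult_nonneg_nonneg)
  obtain B where B: "B \<in> events" "prob B \<le> (2 + 4 * (c1 + c2 + 3)) * real n powr (- c)"
    and dev: "\<And>w. w \<in> space M \<Longrightarrow> w \<notin> B \<Longrightarrow> \<bar>real (count_le X n w xi) - real k\<bar> < c1 * real n * s1"
    and cnt: "\<And>w j. w \<in> space M \<Longrightarrow> w \<notin> B \<Longrightarrow> \<bar>real_of_int j\<bar> \<le> real J \<Longrightarrow>
      \<bar>real (count_le X n w (xg j)) - real (count_le X n w xi) - real_of_int j\<bar> \<le> c2 * real n * L powr (3/4)"
    using good_event_prob[OF indep distF n3 kn c, of xg xi] small xg xg0 xg_mono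
    unfolding c1_def c2_def s1_def L_def J_def p_def by blast
  have taylor: "\<bar>G y - G xi - r * (F y - p)\<bar> \<le> K * \<bar>F y - p\<bar> powr (3/2)"
    if "\<bar>F y - p\<bar> \<le> (c1 + c2 + 2) * s1" for y
  proof (intro expansion)
    have "(c1 + c2 + 2) * s1 \<le> (c1 + c2 + 3) * s1" using s1 by (simp add: mult_right_mono)
    thus "F y \<in> {lo..<hi}" using that window(2,3) unfolding s1_def abs_le_iff by auto
  qed
  have "\<bar>int_mean G X n k xi w + (1/2) * (ecdf X n w xi - F xi)\<^sup>2 * r\<bar>
      \<le> (Mm * c1 * (1/2 + c2 + 2) + c1 * K * (c1 + c2 + 2) powr (3/2)) * L powr (5/4)"
    if w: "w \<in> space M" "w \<notin> B" for w
    using remainder_le_on_good_event[OF n3 kn Q.mono c12, where xg = xg and xi = xi and G = G and r = r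
        and K = K and Mm = Mm and X = X and w = w and J = J]
      grid_size_bounds(1)[OF n3 c12] xg Fxi taylor r K dev[OF w] cnt[OF w]
    unfolding J_def s1_def L_def p_def by blast
  hence "{w\<in>space M. \<bar>int_mean G X n k xi w + (1/2) * (ecdf X n w xi - F xi)\<^sup>2 * r\<bar>
      > (Mm * c1 * (1/2 + c2 + 2) + c1 * K * (c1 + c2 + 2) powr (3/2)) * L powr (5/4)} \<subseteq> B"
    by (force simp: not_less[symmetric])
  thus ?thesis using B by blast
qed

section \<open>Asymptotics in n\<close>

lemma open_Icc_enlarge:
  fixes U :: "real set"
  assumes U: "open U" "{a..b} \<subseteq> U" and ab: "a \<le> b"
  obtains lo hi where "lo < a" "b < hi" "{lo..hi} \<subseteq> U"
proof -
  obtain e1 e2 where e1: "e1 > 0" "ball a e1 \<subseteq> U" and e2: "e2 > 0" "ball b e2 \<subseteq> U"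
    using U ab by (meson atLeastAtMost_iff open_contains_ball order_refl subsetD)
  define e where "e = min e1 e2 / 2"
  have "x \<in> U" if "x \<in> {a - e..b + e}" for x
  proof -
    consider "x < a" | "x \<in> {a..b}" | "b < x" by force
    thus ?thesis
    proof cases
      case 1 thus ?thesis using that e1 e2 by (intro subsetD[OF e1(2)]) (auto simp: dist_real_def e_def)
    next
      case 2 thus ?thesis using U(2) by auto
    next
      case 3 thus ?thesis using that e1 e2 by (intro subsetD[OF e2(2)]) (auto simp: dist_real_def e_def)
    qed
  qed
  moreover have "e > 0" using e1 e2 by (simp add: e_def)
  ultimately show thesis by (intro that[of "a - e" "b + e"]) auto
qed

lemma liminf_ereal_eventually_gt:
  assumes "liminf (\<lambda>n. ereal (x n)) = ereal a" "b < a"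
  shows "\<forall>\<^sub>F n in sequentially. b < x n"
proof -
  have "ereal a \<le> liminf (\<lambda>n. ereal (x n))" using assms(1) by simp
  hence "\<forall>y<ereal a. \<forall>\<^sub>F n in sequentially. y < ereal (x n)" by (simp only: le_Liminf_iff)
  moreover have "ereal b < ereal a" using assms(2) by simp
  ultimately have "\<forall>\<^sub>F n in sequentially. ereal b < ereal (x n)" by blast
  thus ?thesis by simp
qed

lemma limsup_ereal_eventually_less:
  assumes "limsup (\<lambda>n. ereal (x n)) = ereal a" "a < b"
  shows "\<forall>\<^sub>F n in sequentially. x n < b"
proof -
  have "limsup (\<lambda>n. ereal (x n)) \<le> ereal a" using assms(1) by simp
  hence "\<forall>y>ereal a. \<forall>\<^sub>F n in sequentially. ereal (x n) < y" by (simp only: Limsup_le_iff)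
  moreover have "ereal a < ereal b" using assms(2) by simp
  ultimately have "\<forall>\<^sub>F n in sequentially. ereal (x n) < ereal b" by blast
  thus ?thesis by simp
qed

lemma sqrt_ln_over_n_tendsto_0: "((\<lambda>n::nat. (ln (real n) / real n) powr (1/2)) \<longlongrightarrow> 0) sequentially"
  by real_asymp

lemma (in prob_space) remainder_tail_bound_eventually:
  fixes X :: "nat \<Rightarrow> 'a \<Rightarrow> real" and F G f g :: "real \<Rightarrow> real" and k :: "nat \<Rightarrow> nat"
    and a1 a2 lo hi K Mm c :: real
  assumes indep: "indep_vars (\<lambda>_. borel) X {1..}"
    and distF: "\<And>i x. i \<ge> 1 \<Longrightarrow> prob {w\<in>space M. X i w \<le> x} = F x"
    and rcm: "right_continuous_mono F 0 1" and k_le: "\<And>n. k n \<le> n"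
    and a1: "liminf (\<lambda>n. ereal (real (k n) / real n)) = ereal a1"
    and a2: "limsup (\<lambda>n. ereal (real (k n) / real n)) = ereal a2"
    and window: "{lo..hi} \<subseteq> {0<..<1}" "lo < a1" "a2 < hi"
    and FQ: "\<And>p. p \<in> {lo..hi} \<Longrightarrow> F (quantile F p) = p"
    and r: "\<And>p. p \<in> {lo..hi} \<Longrightarrow> \<bar>g (quantile F p) / f (quantile F p)\<bar> \<le> Mm"
    and expansion: "\<And>p y. p \<in> {lo..hi} \<Longrightarrow> F y \<in> {lo..<hi} \<Longrightarrow>
      \<bar>G y - G (quantile F p) - (g (quantile F p) / f (quantile F p)) * (F y - p)\<bar>
        \<le> K * \<bar>F y - p\<bar> powr (3/2)"
    and K: "K \<ge> 0" and c: "c > 0"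
  shows "\<exists>A>0. \<exists>C N. \<forall>n\<ge>N.
     (let xi = quantile F (real (k n) / real n);
          R = (\<lambda>w. int_mean G X n (k n) xi w
                   + (1/2) * (ecdf X n w xi - F xi)\<^sup>2 * (g xi / f xi))
      in \<exists>B\<in>sets M. {w\<in>space M. \<bar>R w\<bar> > A * (ln (real n) / real n) powr (5/4)} \<subseteq> B
                   \<and> measure M B \<le> C * real n powr (- c))"
proof -
  define c1 where "c1 = 2 * sqrt c"
  define c2 where "c2 = 4 * (c + 1) + 2 * sqrt c + 3"
  define A0 where "A0 = Mm * c1 * (1/2 + c2 + 2) + c1 * K * (c1 + c2 + 2) powr (3/2)"
  define \<delta> where "\<delta> = min (a1 - lo) (hi - a2) / 2"
  have \<delta>: "\<delta> > 0" "lo \<le> a1 - 2 * \<delta>" "a2 + 2 * \<delta> \<le> hi" using window(2,3) by (auto simp: \<delta>_def)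
  have "\<forall>\<^sub>F n in sequentially. n \<ge> 3 \<and> a1 - \<delta> < real (k n) / real n
      \<and> real (k n) / real n < a2 + \<delta> \<and> (c1 + c2 + 3) * (ln (real n) / real n) powr (1/2) < \<delta>"
    using \<delta>(1)
    by (intro eventually_conj eventually_ge_at_top liminf_ereal_eventually_gt[OF a1]
        limsup_ereal_eventually_less[OF a2] order_tendstoD(2)[OF tendsto_mult_right_zero[OF sqrt_ln_over_n_tendsto_0]])
      auto
  then obtain N where N: "\<And>n. n \<ge> N \<Longrightarrow> n \<ge> 3 \<and> a1 - \<delta> < real (k n) / real n
      \<and> real (k n) / real n < a2 + \<delta> \<and> (c1 + c2 + 3) * (ln (real n) / real n) powr (1/2) < \<delta>"
    unfolding eventually_sequentially by blast
  show ?thesis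
  proof (rule exI[of _ "max A0 1"], rule conjI[OF max.strict_coboundedI2[OF zero_less_one]],
      rule exI[of _ "2 + 4 * (c1 + c2 + 3)"], rule exI[of _ N], intro allI impI)
    fix n assume "n \<ge> N"
    note n = N[OF this]
    define xi where "xi = quantile F (real (k n) / real n)"
    have p: "real (k n) / real n \<in> {lo..hi}" using n \<delta> by auto
    have margin: "lo < real (k n) / real n - (c1 + c2 + 3) * (ln (real n) / real n) powr (1/2)"
      "real (k n) / real n + (c1 + c2 + 3) * (ln (real n) / real n) powr (1/2) < hi"
      using n \<delta> by auto
    obtain B where B: "B \<in> sets M" "measure M B \<le> (2 + 4 * (c1 + c2 + 3)) * real n powr (- c)"
      and sub: "{w\<in>space M. \<bar>int_mean G X n (k n) xi w + (1/2) * (ecdf X n w xi - F xi)\<^sup>2 * (g xi / f xi)\<bar>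
        > A0 * (ln (real n) / real n) powr (5/4)} \<subseteq> B"
      using remainder_tail_bound[OF indep distF rcm conjunct1[OF n] k_le c window(1) margin[unfolded c1_def c2_def]
          FQ expansion[OF p] r[OF p] K]
      unfolding xi_def A0_def c1_def c2_def by blast
    have "A0 * (ln (real n) / real n) powr (5/4) \<le> max A0 1 * (ln (real n) / real n) powr (5/4)"
      by (intro mult_right_mono) auto
    hence "{w\<in>space M. \<bar>int_mean G X n (k n) xi w + (1/2) * (ecdf X n w xi - F xi)\<^sup>2 * (g xi / f xi)\<bar>
        > max A0 1 * (ln (real n) / real n) powr (5/4)} \<subseteq> B"
      using sub by auto
    thus "let xi = quantile F (real (k n) / real n);
        R = (\<lambda>w. int_mean G X n (k n) xi w + (1/2) * (ecdf X n w xi - F xi)\<^sup>2 * (g xi / f xi))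
      in \<exists>B\<in>sets M. {w\<in>space M. \<bar>R w\<bar> > max A0 1 * (ln (real n) / real n) powr (5/4)} \<subseteq> B
                 \<and> measure M B \<le> (2 + 4 * (c1 + c2 + 3)) * real n powr (- c)"
      using B unfolding Let_def xi_def by blast
  qed
qed

theorem corollary2:
  fixes M :: "'a measure" and X :: "nat \<Rightarrow> 'a \<Rightarrow> real"
    and F G f g :: "real \<Rightarrow> real" and k :: "nat \<Rightarrow> nat"
    and U :: "real set" and a1 a2 \<alpha> :: real
  assumes "prob_space M"
    and indep: "prob_space.indep_vars M (\<lambda>_. borel) X {1..}"
    and distF: "\<And>i x. i \<ge> 1 \<Longrightarrow> measure M {w\<in>space M. X i w \<le> x} = F x"
    and k_le: "\<And>n. k n \<le> n"
    and a1: "liminf (\<lambda>n. ereal (real (k n) / real n)) = ereal a1"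
    and a2: "limsup (\<lambda>n. ereal (real (k n) / real n)) = ereal a2"
    and a_bounds: "0 < a1" "a1 \<le> a2" "a2 < 1"
    and U_open: "open U" and U_sub: "U \<subseteq> {0<..<1}" and U_cont: "{a1..a2} \<subseteq> U"
    and f_deriv: "\<And>x. x \<in> quantile F ` U \<Longrightarrow> (F has_real_derivative f x) (at x) \<and> f x > 0"
    and g_deriv: "\<And>x. x \<in> quantile F ` U \<Longrightarrow> (G has_real_derivative g x) (at x)"
    and alpha: "\<alpha> \<ge> 1/2"
    and f_holder: "holder_on (quantile F ` U) \<alpha> f"
    and g_holder: "holder_on (quantile F ` U) \<alpha> g"
  shows "\<forall>c>0. \<exists>A>0. \<exists>C N. \<forall>n\<ge>N.
     (let xi = quantile F (real (k n) / real n);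
          R = (\<lambda>w. int_mean G X n (k n) xi w
                   + (1/2) * (ecdf X n w xi - F xi)\<^sup>2 * (g xi / f xi))
      in \<exists>B\<in>sets M. {w\<in>space M. \<bar>R w\<bar> > A * (ln (real n) / real n) powr (5/4)} \<subseteq> B
                   \<and> measure M B \<le> C * real n powr (- c))"
proof -
  interpret P: prob_space M by fact
  have "X 1 \<in> borel_measurable M" using indep by (auto simp: P.indep_vars_def)
  hence rcm: "right_continuous_mono F 0 1"
    using P.right_continuous_mono_prob_le[of "X 1"] distF[of 1] by simp
  obtain lo hi where window: "lo < a1" "a2 < hi" "{lo..hi} \<subseteq> U"
    using open_Icc_enlarge[OF U_open U_cont a_bounds(2)] .
  moreover have "lo \<le> hi" using window(1,2) a_bounds(2) by linarith
  ultimately obtain K Mm where "K \<ge> 0" "Mm \<ge> 0"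
    and "\<And>p. p \<in> {lo..hi} \<Longrightarrow> F (quantile F p) = p"
    and "\<And>p. p \<in> {lo..hi} \<Longrightarrow> \<bar>g (quantile F p) / f (quantile F p)\<bar> \<le> Mm"
    and "\<And>p y. p \<in> {lo..hi} \<Longrightarrow> F y \<in> {lo..<hi} \<Longrightarrow>
      \<bar>G y - G (quantile F p) - (g (quantile F p) / f (quantile F p)) * (F y - p)\<bar>
        \<le> K * \<bar>F y - p\<bar> powr (3/2)"
    using uniform_expansion[OF rcm U_sub _ _ f_deriv g_deriv alpha f_holder g_holder] by blast
  with window U_sub show ?thesis
    by (intro allI impI P.remainder_tail_bound_eventually[OF indep distF rcm k_le a1 a2]) auto
qed

end
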